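(* Consider the linear model $y_t = X_t'\beta + e_t$, $t=1,2,\ldots$, where $X_t$ is a $K\times 1$ vector of observed predictors and $\beta\in\mathbb{R}^K$ is a time-invariant parameter. Suppose the error process $\{e_t\}$ satisfies: (a) $E|e_t|^r<\infty$ for some $r>2$, for all $t$; (b) $\{e_t\}$ is a zero-mean strictly stationary strong mixing process with mixing coefficients $\alpha(k)=O\big(k^{-\frac{r}{r-2}-\delta}\big)$ for some $\delta>0$. Suppose further that for $j=0,1$ the moments $E(X_te_{t-j})$, $E(X_{t-j}e_t)$ and $E(X_tX_{t-j}')$ exist and are such that $\hat\beta\to_p\beta$, where $\hat\beta$ is the least squares estimator of $\beta$ computed from $t=1,\ldots,T_0$. Let $\hat e_t=y_t-X_t'\hat\beta$ ($t\le T_0$) be the OLS residuals, let $$\hat\rho_1=\frac{\sum_{t=1}^{T_0}\hat e_{t-1}\hat e_t}{\sum_{t=1}^{T_0}\hat e_{t-1}^2},$$ let $\hat y_{T_0+1|T_0}=X_{T_0+1}'\hat\beta$ be the standard prediction with error $\hat e_{T_0+1|T_0}=y_{T_0+1}-\hat y_{T_0+1|T_0}$, and let $\hat y^+_{T_0+1|T_0}=\hat y_{T_0+1|T_0}+\hat\rho_1\hat e_{T_0}$ be the corrected prediction with error $\hat e^+_{T_0+1|T_0}=y_{T_0+1}-\hat y^+_{T_0+1|T_0}$. Write $\gamma_k=E(e_te_{t-k})$. Then, as $T_0\to\infty$: (i) $\hat\rho_1\to_p\rho_1\equiv\gamma_1/\gamma_0$; (ii) $\hat e_{T_0+1|T_0}=e_{T_0+1}+o_p(1)$,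 where $e_{T_0+1}$ has mean $0$ and variance $\gamma_0$; (iii) $\hat e^+_{T_0+1|T_0}=e_{T_0+1}-\rho_1e_{T_0}+o_p(1)$, where $e_{T_0+1}-\rho_1e_{T_0}$ has mean $0$ and variance $\gamma_0(1-\rho_1^2)$.
   Context: The strong mixing coefficients are $\alpha(k)=\sup_{A,B}|P(A\cap B)-P(A)P(B)|$, where $A$ and $B$ range over events in the sigma fields generated by $\{e_s:s\le 0\}$ and $\{e_s:s\ge k\}$ respectively. *)

theory Defs
  imports "HOL-Probability.Probability" "HOL-Library.Landau_Symbols"
begin

definition conv_prob :: "'a measure \<Rightarrow> (nat \<Rightarrow> 'a \<Rightarrow> 'b::{metric_space,second_countable_topology}) \<Rightarrow> 'b \<Rightarrow> bool" where
  "conv_prob M Z c \<longleftrightarrow> (\<forall>T. Z T \<in> borel_measurable M) \<and>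
     (\<forall>\<epsilon>>0. (\<lambda>T. measure M {\<omega> \<in> space M. dist (Z T \<omega>) c > \<epsilon>}) \<longlonglongrightarrow> 0)"

definition gen_sigma :: "'a measure \<Rightarrow> (int \<Rightarrow> 'a \<Rightarrow> real) \<Rightarrow> int set \<Rightarrow> 'a set set" where
  "gen_sigma M e S = sigma_sets (space M) (\<Union>s\<in>S. {e s -` B \<inter> space M | B. B \<in> sets borel})"

definition mixing_coeff :: "'a measure \<Rightarrow> (int \<Rightarrow> 'a \<Rightarrow> real) \<Rightarrow> int \<Rightarrow> real" where
  "mixing_coeff M e k = (SUP AB \<in> gen_sigma M e {..0} \<times> gen_sigma M e {k..}.
       \<bar>measure M (fst AB \<inter> snd AB) - measure M (fst AB) * measure M (snd AB)\<bar>)"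

definition strictly_stationary :: "'a measure \<Rightarrow> (int \<Rightarrow> 'a \<Rightarrow> real) \<Rightarrow> bool" where
  "strictly_stationary M e \<longleftrightarrow> (\<forall>h::int.
     distr M (Pi\<^sub>M UNIV (\<lambda>_. borel)) (\<lambda>\<omega> t. e (t + h) \<omega>)
   = distr M (Pi\<^sub>M UNIV (\<lambda>_. borel)) (\<lambda>\<omega> t. e t \<omega>))"

text \<open>Autocovariance gamma_k = E(e_t e_{t-k}) (taken at t = 0; time-invariant under stationarity).\<close>
definition acov :: "'a measure \<Rightarrow> (int \<Rightarrow> 'a \<Rightarrow> real) \<Rightarrow> int \<Rightarrow> real" where
  "acov M e k = integral\<^sup>L M (\<lambda>\<omega>. e 0 \<omega> * e (- k) \<omega>)"

definition ols :: "(int \<Rightarrow> 'a \<Rightarrow> real^'k) \<Rightarrow> (int \<Rightarrow> 'a \<Rightarrow> real) \<Rightarrow> nat \<Rightarrow> 'a \<Rightarrow> real^'k" where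
  "ols X y T \<omega> = matrix_inv (\<Sum>t\<in>{1..int T}. (\<chi> i j. X t \<omega> $ i * X t \<omega> $ j))
                  *v (\<Sum>t\<in>{1..int T}. y t \<omega> *\<^sub>R X t \<omega>)"

definition resid :: "(int \<Rightarrow> 'a \<Rightarrow> real^'k) \<Rightarrow> (int \<Rightarrow> 'a \<Rightarrow> real) \<Rightarrow> nat \<Rightarrow> int \<Rightarrow> 'a \<Rightarrow> real" where
  "resid X y T t \<omega> = y t \<omega> - X t \<omega> \<bullet> ols X y T \<omega>"

definition rho_hat :: "(int \<Rightarrow> 'a \<Rightarrow> real^'k) \<Rightarrow> (int \<Rightarrow> 'a \<Rightarrow> real) \<Rightarrow> nat \<Rightarrow> 'a \<Rightarrow> real" where
  "rho_hat X y T \<omega> = (\<Sum>t\<in>{1..int T}. resid X y T (t - 1) \<omega> * resid X y T t \<omega>)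
                     / (\<Sum>t\<in>{1..int T}. (resid X y T (t - 1) \<omega>)^2)"

definition pred :: "(int \<Rightarrow> 'a \<Rightarrow> real^'k) \<Rightarrow> (int \<Rightarrow> 'a \<Rightarrow> real) \<Rightarrow> nat \<Rightarrow> 'a \<Rightarrow> real" where
  "pred X y T \<omega> = X (int T + 1) \<omega> \<bullet> ols X y T \<omega>"

definition pred_plus :: "(int \<Rightarrow> 'a \<Rightarrow> real^'k) \<Rightarrow> (int \<Rightarrow> 'a \<Rightarrow> real) \<Rightarrow> nat \<Rightarrow> 'a \<Rightarrow> real" where
  "pred_plus X y T \<omega> = pred X y T \<omega> + rho_hat X y T \<omega> * resid X y T (int T) \<omega>"

end

theory Submission
  imports Defs
begin

text \<open>
  The residuals are \<open>e t + X t \<bullet> d\<close>, where \<open>d = \<beta> - ols X y T\<close> is the estimation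
  error, so the sample autocovariances of the residuals at lags 0 and 1 differ from those of
  the errors by at most \<open>\<parallel>d\<parallel> + \<parallel>d\<parallel>\<^sup>2\<close> times the average of
  \<open>e(t-1)\<^sup>2 + e(t)\<^sup>2 + \<parallel>X(t-1)\<parallel>\<^sup>2 + \<parallel>X(t)\<parallel>\<^sup>2\<close>. That average is bounded in
  probability because its mean is bounded, and \<open>d \<rightarrow> 0\<close> in probability.

  The error autocovariances converge to \<open>\<gamma>\<^sub>1\<close> and \<open>\<gamma>\<^sub>0\<close> by a weak law of large numbers
  for \<open>f(e(t), e(t-1))\<close>, valid for every strictly stationary process with \<open>\<alpha>(k) \<rightarrow> 0\<close>
  and integrable \<open>f(e(0), e(-1))\<close>: clamping to \<open>[-n, n]\<close> and rounding to the grid of mesh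
  \<open>1/n\<close> costs little in \<open>L\<^sup>1\<close>, uniformly in \<open>t\<close>, while the lag-\<open>k\<close> covariance of the
  rounded, finitely-valued variables is at most a constant times \<open>\<alpha>(k - 1)\<close>, so their
  average has vanishing variance. Hence, of the moment and mixing-rate hypotheses, only
  \<open>E e(0)\<^sup>2 < \<infinity>\<close> and \<open>\<alpha>(k) \<rightarrow> 0\<close> are used.

  The prediction errors then follow by continuous mapping, and their moments by stationarity.
\<close>

section \<open>Convergence in probability\<close>

lemma conv_prob_measurable:
  "conv_prob M Z c \<Longrightarrow> Z T \<in> borel_measurable M"
  unfolding conv_prob_def by blast

lemma conv_probD:
  "conv_prob M Z c \<Longrightarrow> \<epsilon> > 0 \<Longrightarrow> (\<lambda>T. measure M {\<omega> \<in> space M. dist (Z T \<omega>) c > \<epsilon>}) \<longlonglongrightarrow> 0"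
  unfolding conv_prob_def by blast

lemma conv_prob_const: "conv_prob M (\<lambda>T \<omega>. c) c"
  unfolding conv_prob_def by simp

lemma (in prob_space) conv_prob_dist_le:
  assumes "conv_prob M W c" and "\<And>T. Z T \<in> borel_measurable M"
    and "\<And>T \<omega>. \<omega> \<in> space M \<Longrightarrow> dist (Z T \<omega>) d \<le> dist (W T \<omega>) c"
  shows "conv_prob M Z d"
  unfolding conv_prob_def
proof (intro conjI allI impI assms(2))
  fix \<epsilon> :: real
  assume "\<epsilon> > 0"
  have [measurable]: "\<And>T. W T \<in> borel_measurable M" "\<And>T. Z T \<in> borel_measurable M"
    using assms(1,2) by (auto dest: conv_prob_measurable)
  have "prob {\<omega> \<in> space M. dist (Z T \<omega>) d > \<epsilon>} \<le> prob {\<omega> \<in> space M. dist (W T \<omega>) c > \<epsilon>}" for T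
  proof (rule finite_measure_mono)
    show "{\<omega> \<in> space M. dist (Z T \<omega>) d > \<epsilon>} \<subseteq> {\<omega> \<in> space M. dist (W T \<omega>) c > \<epsilon>}"
      by (auto intro: less_le_trans[OF _ assms(3)])
  qed measurable
  then show "(\<lambda>T. prob {\<omega> \<in> space M. dist (Z T \<omega>) d > \<epsilon>}) \<longlonglongrightarrow> 0"
    by (intro tendsto_sandwich[OF _ _ tendsto_const conv_probD[OF assms(1) \<open>\<epsilon> > 0\<close>]])
       (auto intro: always_eventually)
qed

lemma (in prob_space) conv_prob_cong:
  assumes "conv_prob M W c" and "\<And>T. Z T \<in> borel_measurable M"
    and "\<And>T \<omega>. \<omega> \<in> space M \<Longrightarrow> Z T \<omega> = W T \<omega>"
  shows "conv_prob M Z c"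
  using assms by (intro conv_prob_dist_le[OF assms(1,2)]) simp

lemma (in prob_space) conv_prob_isCont:
  fixes Z :: "nat \<Rightarrow> 'a \<Rightarrow> 'b::{metric_space,second_countable_topology}"
    and g :: "'b \<Rightarrow> 'c::{metric_space,second_countable_topology}"
  assumes Z: "conv_prob M Z a" and "isCont g a"
    and meas: "\<And>T. (\<lambda>\<omega>. g (Z T \<omega>)) \<in> borel_measurable M"
  shows "conv_prob M (\<lambda>T \<omega>. g (Z T \<omega>)) (g a)"
  unfolding conv_prob_def
proof (intro conjI allI impI meas)
  fix \<epsilon> :: real
  assume "\<epsilon> > 0"
  obtain \<delta> where "\<delta> > 0" and \<delta>: "\<And>x. dist x a < \<delta> \<Longrightarrow> dist (g x) (g a) < \<epsilon>"
    using \<open>isCont g a\<close>[unfolded continuous_at_eps_delta, rule_format, OF \<open>\<epsilon> > 0\<close>] by auto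
  have [measurable]: "\<And>T. Z T \<in> borel_measurable M"
    using Z by (rule conv_prob_measurable)
  have far: "dist (Z T \<omega>) a > \<delta>/2" if "dist (g (Z T \<omega>)) (g a) > \<epsilon>" for T \<omega>
  proof (rule ccontr)
    assume "\<not> ?thesis"
    then have "dist (Z T \<omega>) a < \<delta>"
      using \<open>\<delta> > 0\<close> by linarith
    then show False
      using \<delta> that by (meson not_less_iff_gr_or_eq)
  qed
  have "{\<omega> \<in> space M. dist (Z T \<omega>) a > \<delta>/2} \<in> events" for T
    by measurable
  then have le: "prob {\<omega> \<in> space M. dist (g (Z T \<omega>)) (g a) > \<epsilon>} \<le> prob {\<omega> \<in> space M. dist (Z T \<omega>) a > \<delta>/2}"
    for T
    using far by (intro finite_measure_mono) auto
  have lim: "(\<lambda>T. prob {\<omega> \<in> space M. dist (Z T \<omega>) a > \<delta>/2}) \<longlonglongrightarrow> 0"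
    using \<open>\<delta> > 0\<close> by (intro conv_probD[OF Z]) simp
  show "(\<lambda>T. prob {\<omega> \<in> space M. dist (g (Z T \<omega>)) (g a) > \<epsilon>}) \<longlonglongrightarrow> 0"
    by (rule tendsto_sandwich[OF always_eventually always_eventually tendsto_const lim]) (simp, blast intro: le)
qed

lemma (in prob_space) conv_prob_Pair:
  fixes Z :: "nat \<Rightarrow> 'a \<Rightarrow> 'b::{metric_space,second_countable_topology}"
    and W :: "nat \<Rightarrow> 'a \<Rightarrow> 'c::{metric_space,second_countable_topology}"
  assumes Z: "conv_prob M Z a" and W: "conv_prob M W b"
  shows "conv_prob M (\<lambda>T \<omega>. (Z T \<omega>, W T \<omega>)) (a, b)"
  unfolding conv_prob_def
proof (intro conjI allI impI)
  have [measurable]: "\<And>T. Z T \<in> borel_measurable M" "\<And>T. W T \<in> borel_measurable M"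
    using Z W by (auto dest: conv_prob_measurable)
  show "(\<lambda>\<omega>. (Z T \<omega>, W T \<omega>)) \<in> borel_measurable M" for T
    by measurable
  fix \<epsilon> :: real
  assume "\<epsilon> > 0"
  have events: "{\<omega> \<in> space M. dist (Z T \<omega>) a > \<epsilon>/2} \<in> events" "{\<omega> \<in> space M. dist (W T \<omega>) b > \<epsilon>/2} \<in> events"
    for T
    by measurable
  have far: "dist (Z T \<omega>) a > \<epsilon>/2 \<or> dist (W T \<omega>) b > \<epsilon>/2"
    if "dist (Z T \<omega>, W T \<omega>) (a, b) > \<epsilon>" for T \<omega>
  proof (rule ccontr)
    assume "\<not> ?thesis"
    then have "dist (Z T \<omega>) a \<le> \<epsilon>/2" "dist (W T \<omega>) b \<le> \<epsilon>/2"
      by auto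
    moreover have "dist (Z T \<omega>, W T \<omega>) (a, b) \<le> dist (Z T \<omega>) a + dist (W T \<omega>) b"
      unfolding dist_Pair_Pair by (rule sqrt_sum_squares_le_sum_abs[THEN order_trans]) simp
    ultimately show False
      using that by linarith
  qed
  have le: "prob {\<omega> \<in> space M. dist (Z T \<omega>, W T \<omega>) (a, b) > \<epsilon>}
      \<le> prob {\<omega> \<in> space M. dist (Z T \<omega>) a > \<epsilon>/2} + prob {\<omega> \<in> space M. dist (W T \<omega>) b > \<epsilon>/2}" for T
  proof -
    have "prob {\<omega> \<in> space M. dist (Z T \<omega>, W T \<omega>) (a, b) > \<epsilon>}
        \<le> prob ({\<omega> \<in> space M. dist (Z T \<omega>) a > \<epsilon>/2} \<union> {\<omega> \<in> space M. dist (W T \<omega>) b > \<epsilon>/2})"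
      by (intro finite_measure_mono sets.Un events) (use far in auto)
    also have "\<dots> \<le> prob {\<omega> \<in> space M. dist (Z T \<omega>) a > \<epsilon>/2} + prob {\<omega> \<in> space M. dist (W T \<omega>) b > \<epsilon>/2}"
      by (rule measure_Un_le[OF events])
    finally show ?thesis .
  qed
  have "\<epsilon>/2 > 0"
    using \<open>\<epsilon> > 0\<close> by simp
  from tendsto_add[OF conv_probD[OF Z this] conv_probD[OF W this]]
  have lim: "(\<lambda>T. prob {\<omega> \<in> space M. dist (Z T \<omega>) a > \<epsilon>/2} + prob {\<omega> \<in> space M. dist (W T \<omega>) b > \<epsilon>/2}) \<longlonglongrightarrow> 0"
    by simp
  show "(\<lambda>T. prob {\<omega> \<in> space M. dist (Z T \<omega>, W T \<omega>) (a, b) > \<epsilon>}) \<longlonglongrightarrow> 0"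
    by (rule tendsto_sandwich[OF always_eventually always_eventually tendsto_const lim]) (simp, blast intro: le)
qed

lemma (in prob_space) conv_prob_isCont2:
  fixes Z :: "nat \<Rightarrow> 'a \<Rightarrow> 'b::{metric_space,second_countable_topology}"
    and W :: "nat \<Rightarrow> 'a \<Rightarrow> 'c::{metric_space,second_countable_topology}"
    and g :: "'b \<Rightarrow> 'c \<Rightarrow> 'd::{metric_space,second_countable_topology}"
  assumes "conv_prob M Z a" and "conv_prob M W b"
    and "isCont (\<lambda>p. g (fst p) (snd p)) (a, b)"
    and "\<And>T. (\<lambda>\<omega>. g (Z T \<omega>) (W T \<omega>)) \<in> borel_measurable M"
  shows "conv_prob M (\<lambda>T \<omega>. g (Z T \<omega>) (W T \<omega>)) (g a b)"
  using conv_prob_isCont[OF conv_prob_Pair[OF assms(1,2)] assms(3)] assms(4) by simp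

lemma (in prob_space) conv_prob_add:
  fixes Z W :: "nat \<Rightarrow> 'a \<Rightarrow> 'b::{real_normed_vector,second_countable_topology}"
  assumes "conv_prob M Z a" and "conv_prob M W b"
  shows "conv_prob M (\<lambda>T \<omega>. Z T \<omega> + W T \<omega>) (a + b)"
proof (rule conv_prob_isCont2[OF assms(1,2), where g = "(+)"])
  show "(\<lambda>\<omega>. Z T \<omega> + W T \<omega>) \<in> borel_measurable M" for T
    using assms by (intro borel_measurable_add conv_prob_measurable)
qed (intro continuous_intros; simp add: assms)

lemma (in prob_space) conv_prob_diff:
  fixes Z W :: "nat \<Rightarrow> 'a \<Rightarrow> 'b::{real_normed_vector,second_countable_topology}"
  assumes "conv_prob M Z a" and "conv_prob M W b"
  shows "conv_prob M (\<lambda>T \<omega>. Z T \<omega> - W T \<omega>) (a - b)"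
proof (rule conv_prob_isCont2[OF assms(1,2), where g = "(-)"])
  show "(\<lambda>\<omega>. Z T \<omega> - W T \<omega>) \<in> borel_measurable M" for T
    using assms by (intro borel_measurable_diff conv_prob_measurable)
qed (intro continuous_intros; simp add: assms)

lemma (in prob_space) conv_prob_mult:
  fixes Z W :: "nat \<Rightarrow> 'a \<Rightarrow> real"
  assumes "conv_prob M Z a" and "conv_prob M W b"
  shows "conv_prob M (\<lambda>T \<omega>. Z T \<omega> * W T \<omega>) (a * b)"
proof (rule conv_prob_isCont2[OF assms(1,2), where g = "(*)"])
  show "(\<lambda>\<omega>. Z T \<omega> * W T \<omega>) \<in> borel_measurable M" for T
    using assms by (intro borel_measurable_times conv_prob_measurable)
qed (intro continuous_intros; simp add: assms)

lemma (in prob_space) conv_prob_divide: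
  fixes Z W :: "nat \<Rightarrow> 'a \<Rightarrow> real"
  assumes "conv_prob M Z a" and "conv_prob M W b" and "b \<noteq> 0"
  shows "conv_prob M (\<lambda>T \<omega>. Z T \<omega> / W T \<omega>) (a / b)"
proof (rule conv_prob_isCont2[OF assms(1,2), where g = "(/)"])
  show "(\<lambda>\<omega>. Z T \<omega> / W T \<omega>) \<in> borel_measurable M" for T
    using assms by (intro borel_measurable_divide conv_prob_measurable)
qed (intro continuous_intros; simp add: assms)

definition bounded_in_prob :: "'a measure \<Rightarrow> (nat \<Rightarrow> 'a \<Rightarrow> real) \<Rightarrow> bool" where
  "bounded_in_prob M Z \<longleftrightarrow> (\<forall>\<epsilon>>0. \<exists>C>0. \<forall>T. measure M {\<omega> \<in> space M. \<bar>Z T \<omega>\<bar> > C} \<le> \<epsilon>)"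

lemma (in prob_space) bounded_in_prob_if_expectation_abs_le:
  assumes "\<And>T. integrable M (Z T)" and "\<And>T. expectation (\<lambda>\<omega>. \<bar>Z T \<omega>\<bar>) \<le> B"
  shows "bounded_in_prob M Z"
  unfolding bounded_in_prob_def
proof (intro allI impI)
  fix \<epsilon> :: real
  assume "\<epsilon> > 0"
  define C where "C = \<bar>B\<bar> / \<epsilon> + 1"
  have "C > 0"
    unfolding C_def using \<open>\<epsilon> > 0\<close> by (simp add: add_nonneg_pos)
  have "prob {\<omega> \<in> space M. \<bar>Z T \<omega>\<bar> > C} \<le> \<epsilon>" for T
  proof -
    have [measurable]: "Z T \<in> borel_measurable M"
      using assms(1) by blast
    have "prob {\<omega> \<in> space M. \<bar>Z T \<omega>\<bar> > C} \<le> prob {\<omega> \<in> space M. \<bar>Z T \<omega>\<bar> \<ge> C}"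
      by (rule finite_measure_mono) (auto, measurable)
    also have "\<dots> \<le> expectation (\<lambda>\<omega>. \<bar>Z T \<omega>\<bar>) / C"
      using assms(1) \<open>C > 0\<close> by (intro integral_Markov_inequality_measure) auto
    also have "\<dots> \<le> \<bar>B\<bar> / C"
      using assms(2)[of T] \<open>C > 0\<close> by (intro divide_right_mono) auto
    also have "\<dots> \<le> \<epsilon>"
      using \<open>\<epsilon> > 0\<close> unfolding C_def by (simp add: field_simps)
    finally show ?thesis .
  qed
  then show "\<exists>C>0. \<forall>T. prob {\<omega> \<in> space M. \<bar>Z T \<omega>\<bar> > C} \<le> \<epsilon>"
    using \<open>C > 0\<close> by blast
qed

lemma (in prob_space) bounded_in_prob_if_expectation_square_le:
  assumes [measurable]: "\<And>T. Z T \<in> borel_measurable M"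
    and "\<And>T. integrable M (\<lambda>\<omega>. (Z T \<omega>)\<^sup>2)" and "\<And>T. expectation (\<lambda>\<omega>. (Z T \<omega>)\<^sup>2) \<le> B"
  shows "bounded_in_prob M Z"
proof (rule bounded_in_prob_if_expectation_abs_le[where B = "1 + B"])
  fix T
  show integrable: "integrable M (Z T)"
    using assms(2) by (rule square_integrable_imp_integrable[OF assms(1)])
  have "\<bar>z\<bar> \<le> 1 + z\<^sup>2" for z :: real
    using sum_squares_bound[of "\<bar>z\<bar>" 1] by (simp add: power2_eq_square)
  then have "expectation (\<lambda>\<omega>. \<bar>Z T \<omega>\<bar>) \<le> expectation (\<lambda>\<omega>. 1 + (Z T \<omega>)\<^sup>2)"
    using integrable assms(2) by (intro integral_mono) auto
  also have "\<dots> = 1 + expectation (\<lambda>\<omega>. (Z T \<omega>)\<^sup>2)"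
    using assms(2) by (simp add: prob_space)
  finally show "expectation (\<lambda>\<omega>. \<bar>Z T \<omega>\<bar>) \<le> 1 + B"
    using assms(3)[of T] by linarith
qed

lemma (in prob_space) bounded_in_prob_mult_conv_prob_zero:
  assumes Z: "bounded_in_prob M Z" and [measurable]: "\<And>T. Z T \<in> borel_measurable M"
    and W: "conv_prob M W 0"
  shows "conv_prob M (\<lambda>T \<omega>. Z T \<omega> * W T \<omega>) 0"
  unfolding conv_prob_def
proof (intro conjI allI impI)
  have [measurable]: "\<And>T. W T \<in> borel_measurable M"
    using W by (rule conv_prob_measurable)
  show "(\<lambda>\<omega>. Z T \<omega> * W T \<omega>) \<in> borel_measurable M" for T
    by measurable
  fix \<epsilon> :: real
  assume "\<epsilon> > 0"
  show "(\<lambda>T. prob {\<omega> \<in> space M. dist (Z T \<omega> * W T \<omega>) 0 > \<epsilon>}) \<longlonglongrightarrow> 0"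
  proof (rule LIMSEQ_I)
    fix r :: real
    assume "r > 0"
    then obtain C where "C > 0" and C: "\<And>T. prob {\<omega> \<in> space M. \<bar>Z T \<omega>\<bar> > C} \<le> r/2"
      using Z unfolding bounded_in_prob_def by (meson half_gt_zero)
    have lim: "(\<lambda>T. prob {\<omega> \<in> space M. dist (W T \<omega>) 0 > \<epsilon>/C}) \<longlonglongrightarrow> 0"
      using \<open>C > 0\<close> \<open>\<epsilon> > 0\<close> by (intro conv_probD[OF W]) simp
    then obtain N where N: "\<And>T. T \<ge> N \<Longrightarrow> prob {\<omega> \<in> space M. dist (W T \<omega>) 0 > \<epsilon>/C} < r/2"
      using LIMSEQ_D[OF lim, of "r/2"] \<open>r > 0\<close> by auto
    have "prob {\<omega> \<in> space M. dist (Z T \<omega> * W T \<omega>) 0 > \<epsilon>} < r" if "T \<ge> N" for T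
    proof -
      have "\<bar>W T \<omega>\<bar> > \<epsilon>/C" if "\<bar>Z T \<omega> * W T \<omega>\<bar> > \<epsilon>" "\<bar>Z T \<omega>\<bar> \<le> C" for \<omega>
      proof -
        have "\<epsilon> < C * \<bar>W T \<omega>\<bar>"
          using that mult_right_mono[OF that(2) abs_ge_zero[of "W T \<omega>"]] by (simp add: abs_mult)
        then show ?thesis
          using \<open>C > 0\<close> by (simp add: divide_less_eq mult.commute)
      qed
      then have "prob {\<omega> \<in> space M. dist (Z T \<omega> * W T \<omega>) 0 > \<epsilon>} \<le>
          prob ({\<omega> \<in> space M. \<bar>Z T \<omega>\<bar> > C} \<union> {\<omega> \<in> space M. dist (W T \<omega>) 0 > \<epsilon>/C})"
        by (intro finite_measure_mono) (force, measurable)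
      also have "\<dots> \<le> prob {\<omega> \<in> space M. \<bar>Z T \<omega>\<bar> > C} + prob {\<omega> \<in> space M. dist (W T \<omega>) 0 > \<epsilon>/C}"
        by (rule measure_Un_le) measurable
      also have "\<dots> < r/2 + r/2"
        using C[of T] N[OF \<open>T \<ge> N\<close>] by linarith
      finally show ?thesis
        by simp
    qed
    then show "\<exists>N. \<forall>T\<ge>N. norm (prob {\<omega> \<in> space M. dist (Z T \<omega> * W T \<omega>) 0 > \<epsilon>} - 0) < r"
      by auto
  qed
qed

lemma (in prob_space) conv_prob_perturb:
  assumes A: "conv_prob M A c" and S: "bounded_in_prob M S" "\<And>T. S T \<in> borel_measurable M"
    and D: "conv_prob M D 0" and B: "\<And>T. B T \<in> borel_measurable M"
    and close: "\<And>T \<omega>. \<omega> \<in> space M \<Longrightarrow> \<bar>B T \<omega> - A T \<omega>\<bar> \<le> S T \<omega> * D T \<omega>"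
  shows "conv_prob M B c"
proof -
  have [measurable]: "\<And>T. A T \<in> borel_measurable M"
    using A by (rule conv_prob_measurable)
  have "conv_prob M (\<lambda>T \<omega>. B T \<omega> - A T \<omega>) 0"
  proof (rule conv_prob_dist_le[OF bounded_in_prob_mult_conv_prob_zero[OF S D]])
    show "(\<lambda>\<omega>. B T \<omega> - A T \<omega>) \<in> borel_measurable M" for T
      using B by measurable
    show "dist (B T \<omega> - A T \<omega>) 0 \<le> dist (S T \<omega> * D T \<omega>) 0" if "\<omega> \<in> space M" for T \<omega>
      using order_trans[OF close[OF that] abs_ge_self] by simp
  qed
  from conv_prob_add[OF A this] have "conv_prob M (\<lambda>T \<omega>. A T \<omega> + (B T \<omega> - A T \<omega>)) c"
    by simp
  then show ?thesis
    by (rule conv_prob_cong) (simp_all add: B)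
qed

lemma abs_perturbed_product_le:
  fixes a b p q x y d :: real
  assumes "d \<ge> 0" and "x \<ge> 0" and "y \<ge> 0" and p: "\<bar>p\<bar> \<le> x * d" and q: "\<bar>q\<bar> \<le> y * d"
  shows "\<bar>(a + p) * (b + q) - a * b\<bar> \<le> (d + d\<^sup>2) * (a\<^sup>2 + b\<^sup>2 + x\<^sup>2 + y\<^sup>2)"
proof -
  have "2 * \<bar>a * q\<bar> \<le> d * (a\<^sup>2 + y\<^sup>2)"
    using mult_left_mono[OF q abs_ge_zero[of a]] mult_left_mono[OF sum_squares_bound[of "\<bar>a\<bar>" y] \<open>d \<ge> 0\<close>]
    by (simp add: abs_mult algebra_simps)
  moreover have "2 * \<bar>p * b\<bar> \<le> d * (x\<^sup>2 + b\<^sup>2)"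
    using mult_right_mono[OF p abs_ge_zero[of b]] mult_left_mono[OF sum_squares_bound[of x "\<bar>b\<bar>"] \<open>d \<ge> 0\<close>]
    by (simp add: abs_mult algebra_simps)
  moreover have "2 * \<bar>p * q\<bar> \<le> d\<^sup>2 * (x\<^sup>2 + y\<^sup>2)"
    using mult_mono[OF p q] mult_left_mono[OF sum_squares_bound[of x y], of "d\<^sup>2"] assms(1-3)
    by (simp add: abs_mult power2_eq_square algebra_simps)
  moreover have "d * (a\<^sup>2 + y\<^sup>2) + d * (x\<^sup>2 + b\<^sup>2) \<le> 2 * (d * (a\<^sup>2 + b\<^sup>2 + x\<^sup>2 + y\<^sup>2))"
    "d\<^sup>2 * (x\<^sup>2 + y\<^sup>2) \<le> 2 * (d\<^sup>2 * (a\<^sup>2 + b\<^sup>2 + x\<^sup>2 + y\<^sup>2))"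
    using \<open>d \<ge> 0\<close> by (simp_all add: algebra_simps add_nonneg_nonneg mult_nonneg_nonneg)
  moreover have "(a + p) * (b + q) - a * b = a * q + p * b + p * q"
    by (simp add: algebra_simps)
  ultimately show ?thesis
    by (simp add: distrib_right)
qed

lemma tendsto_zero_if_bigo_powr_neg:
  fixes f :: "nat \<Rightarrow> real"
  assumes "f \<in> O(\<lambda>k. real k powr p)" and "p < 0"
  shows "f \<longlonglongrightarrow> 0"
proof -
  obtain c where "eventually (\<lambda>k. norm (f k) \<le> c * norm (real k powr p)) sequentially"
    using assms(1) by (elim landau_o.bigE)
  moreover have "(\<lambda>k. c * norm (real k powr p)) \<longlonglongrightarrow> 0"
    using tendsto_mult_right_zero[OF tendsto_norm_zero[OF
        tendsto_neg_powr[OF assms(2) filterlim_real_sequentially]]] .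
  ultimately show ?thesis
    by (rule Lim_null_comparison)
qed

lemma sum_lag_le:
  fixes b :: "nat \<Rightarrow> real"
  assumes "\<And>k. b k \<le> B" and "\<And>k. k \<ge> K \<Longrightarrow> b k \<le> \<epsilon>" and "B \<ge> 0" and "\<epsilon> \<ge> 0"
  shows "(\<Sum>t\<in>{1..T}. b (nat \<bar>int s - int t\<bar>)) \<le> real T * \<epsilon> + 2 * real K * B"
proof -
  let ?near = "{t \<in> {1..T}. nat \<bar>int s - int t\<bar> < K}"
  have "?near \<subseteq> {s - K ..< s + K}"
    by auto
  then have "card ?near \<le> 2 * K"
    using card_mono[of "{s - K ..< s + K}" ?near] by simp
  then have near: "real (card ?near) * B \<le> 2 * real K * B"
    using \<open>B \<ge> 0\<close> by (simp add: mult_right_mono flip: of_nat_mult of_nat_le_iff)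
  have "(\<Sum>t\<in>{1..T}. b (nat \<bar>int s - int t\<bar>))
      \<le> (\<Sum>t\<in>{1..T}. \<epsilon> + (if nat \<bar>int s - int t\<bar> < K then B else 0))"
  proof (rule sum_mono)
    fix t
    show "b (nat \<bar>int s - int t\<bar>) \<le> \<epsilon> + (if nat \<bar>int s - int t\<bar> < K then B else 0)"
      using assms(1)[of "nat \<bar>int s - int t\<bar>"] assms(2)[of "nat \<bar>int s - int t\<bar>"] assms(3,4)
      by (cases "nat \<bar>int s - int t\<bar> < K") auto
  qed
  also have "\<dots> = real T * \<epsilon> + real (card ?near) * B"
    by (simp add: sum.distrib sum.inter_filter[symmetric])
  finally show ?thesis
    using near by linarith
qed

lemma double_sum_lag_average_tendsto_zero:
  fixes b :: "nat \<Rightarrow> real"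
  assumes nonneg: "\<And>k. 0 \<le> b k" and bounded: "\<And>k. b k \<le> B" and lim: "b \<longlonglongrightarrow> 0"
  shows "(\<lambda>T. (\<Sum>s\<in>{1..T}. \<Sum>t\<in>{1..T}. b (nat \<bar>int s - int t\<bar>)) / (real T)\<^sup>2) \<longlonglongrightarrow> 0"
proof (rule LIMSEQ_I)
  fix r :: real
  assume "r > 0"
  obtain K where K: "\<And>k. k \<ge> K \<Longrightarrow> b k \<le> r/2"
    using LIMSEQ_D[OF lim, of "r/2"] \<open>r > 0\<close> nonneg by (force simp: abs_le_iff)
  have "B \<ge> 0"
    using nonneg[of 0] bounded[of 0] by linarith
  obtain N :: nat where N: "real N > 4 * real K * B / r"
    using reals_Archimedean2 by blast
  have "(\<Sum>s\<in>{1..T}. \<Sum>t\<in>{1..T}. b (nat \<bar>int s - int t\<bar>)) / (real T)\<^sup>2 < r" if "T > N" for T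
  proof -
    have "4 * real K * B < r * real N"
      using N \<open>r > 0\<close> by (simp add: divide_less_eq mult.commute)
    also have "\<dots> < r * real T"
      using that \<open>r > 0\<close> by simp
    finally have "4 * real K * B < r * real T" .
    have "real T > 0"
      using that by simp
    have "(\<Sum>s\<in>{1..T}. \<Sum>t\<in>{1..T}. b (nat \<bar>int s - int t\<bar>))
        \<le> (\<Sum>s\<in>{1..T}. real T * (r/2) + 2 * real K * B)"
      using bounded K \<open>B \<ge> 0\<close> \<open>r > 0\<close> by (intro sum_mono sum_lag_le) simp_all
    also have "\<dots> = real T * (real T * (r/2) + 2 * real K * B)"
      by simp
    also have "\<dots> < real T * (real T * r)"
      using \<open>real T > 0\<close> \<open>4 * real K * B < r * real T\<close>
      by (intro mult_strict_left_mono) (simp_all add: mult.commute[of r])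
    also have "\<dots> = r * (real T)\<^sup>2"
      by (simp add: power2_eq_square)
    finally show ?thesis
      using \<open>real T > 0\<close> by (simp add: pos_divide_less_eq)
  qed
  moreover have "(\<Sum>s\<in>{1..T}. \<Sum>t\<in>{1..T}. b (nat \<bar>int s - int t\<bar>)) \<ge> 0" for T
    using nonneg by (simp add: sum_nonneg)
  ultimately have "\<forall>T\<ge>Suc N. norm ((\<Sum>s\<in>{1..T}. \<Sum>t\<in>{1..T}. b (nat \<bar>int s - int t\<bar>)) / (real T)\<^sup>2 - 0) < r"
    by (simp add: Suc_le_eq abs_of_nonneg)
  then show "\<exists>N. \<forall>T\<ge>N. norm ((\<Sum>s\<in>{1..T}. \<Sum>t\<in>{1..T}. b (nat \<bar>int s - int t\<bar>)) / (real T)\<^sup>2 - 0) < r"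
    by blast
qed

section \<open>Quantization\<close>

definition quantize :: "nat \<Rightarrow> real \<Rightarrow> real" where
  "quantize n x = of_int \<lfloor>real n * max (- real n) (min (real n) x)\<rfloor> / real n"

definition quantize_grid :: "nat \<Rightarrow> real set" where
  "quantize_grid n = (\<lambda>j. of_int j / real n) ` {- int (n * n) .. int (n * n)}"

lemma quantize_measurable[measurable]: "quantize n \<in> borel_measurable borel"
  unfolding quantize_def by measurable

lemma finite_quantize_grid: "finite (quantize_grid n)"
  unfolding quantize_grid_def by simp

lemma abs_le_if_in_quantize_grid:
  assumes "v \<in> quantize_grid n"
  shows "\<bar>v\<bar> \<le> real n"
proof -
  obtain j where v: "v = of_int j / real n" and j: "\<bar>j\<bar> \<le> int (n * n)"
    using assms unfolding quantize_grid_def by fastforce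
  have "\<bar>real_of_int j\<bar> \<le> real n * real n"
    using j by (metis of_int_abs of_int_of_nat_eq of_int_le_iff of_nat_mult)
  then show ?thesis
    unfolding v by (cases "n = 0") (simp_all add: abs_divide divide_le_eq)
qed

lemma quantize_in_grid:
  assumes "n \<ge> 1"
  shows "quantize n x \<in> quantize_grid n"
proof -
  define y where "y = max (- real n) (min (real n) x)"
  have "- real n \<le> y" "y \<le> real n"
    unfolding y_def using assms by auto
  then have "real n * (- real n) \<le> real n * y" "real n * y \<le> real n * real n"
    by (simp_all only: mult_left_mono of_nat_0_le_iff)
  then show ?thesis
    unfolding quantize_def quantize_grid_def y_def[symmetric]
    by (intro imageI) (auto simp: le_floor_iff floor_le_iff)
qed

lemma abs_quantize_le: "\<bar>quantize n x\<bar> \<le> real n"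
proof (cases "n = 0")
  case False
  then show ?thesis
    using abs_le_if_in_quantize_grid[OF quantize_in_grid[of n x]] by simp
qed (simp add: quantize_def)

lemma abs_quantize_error_le:
  assumes "n \<ge> 1"
  shows "\<bar>x - quantize n x\<bar> \<le> 1 / real n + (if \<bar>x\<bar> > real n then 2 * \<bar>x\<bar> else 0)"
proof (cases "\<bar>x\<bar> > real n")
  case True
  then show ?thesis
    using abs_quantize_le[of n x] by (simp add: add_increasing)
next
  case False
  then have "quantize n x = of_int \<lfloor>real n * x\<rfloor> / real n"
    unfolding quantize_def by (simp add: max_absorb2 min_absorb2)
  then have "x - quantize n x = (real n * x - of_int \<lfloor>real n * x\<rfloor>) / real n"
    using assms by (simp add: field_simps)
  then have "\<bar>x - quantize n x\<bar> = \<bar>real n * x - of_int \<lfloor>real n * x\<rfloor>\<bar> / real n"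
    by (simp add: abs_divide)
  also have "\<dots> \<le> 1 / real n"
    by (intro divide_right_mono) linarith+
  finally show ?thesis
    using False by simp
qed

section \<open>Covariance of finitely-valued variables under strong mixing\<close>

lemma sum_level_indicator:
  fixes X :: "'a \<Rightarrow> real"
  assumes "finite V" and "\<omega> \<in> space M" and "X \<omega> \<in> V"
  shows "(\<Sum>v\<in>V. v * indicator {x \<in> space M. X x = v} \<omega>) = X \<omega>"
proof -
  have "(\<Sum>v\<in>V. v * indicator {x \<in> space M. X x = v} \<omega>) = (\<Sum>v\<in>V. if X \<omega> = v then v else 0)"
    using assms(2) by (intro sum.cong) (auto simp: indicator_def)
  also have "\<dots> = X \<omega>"
    using assms(1,3) by (simp add: sum.delta)
  finally show ?thesis .
qed

lemma (in prob_space) expectation_finite_range: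
  fixes X :: "'a \<Rightarrow> real"
  assumes [measurable]: "X \<in> borel_measurable M"
    and "finite V" and "\<And>\<omega>. \<omega> \<in> space M \<Longrightarrow> X \<omega> \<in> V"
  shows "expectation X = (\<Sum>v\<in>V. v * prob {\<omega> \<in> space M. X \<omega> = v})"
proof -
  have "expectation X = expectation (\<lambda>\<omega>. \<Sum>v\<in>V. v * indicator {x \<in> space M. X x = v} \<omega>)"
  proof (rule Bochner_Integration.integral_cong[OF refl])
    fix \<omega>
    assume "\<omega> \<in> space M"
    then show "X \<omega> = (\<Sum>v\<in>V. v * indicator {x \<in> space M. X x = v} \<omega>)"
      using sum_level_indicator[OF assms(2) \<open>\<omega> \<in> space M\<close> assms(3)] by simp
  qed
  also have "\<dots> = (\<Sum>v\<in>V. v * prob {\<omega> \<in> space M. X \<omega> = v})"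
    by (subst Bochner_Integration.integral_sum) (auto simp: less_top[symmetric])
  finally show ?thesis .
qed

lemma (in prob_space) expectation_mult_finite_range:
  fixes X Y :: "'a \<Rightarrow> real"
  assumes [measurable]: "X \<in> borel_measurable M" "Y \<in> borel_measurable M"
    and "finite V" and "\<And>\<omega>. \<omega> \<in> space M \<Longrightarrow> X \<omega> \<in> V" and "\<And>\<omega>. \<omega> \<in> space M \<Longrightarrow> Y \<omega> \<in> V"
  shows "expectation (\<lambda>\<omega>. X \<omega> * Y \<omega>) =
    (\<Sum>v\<in>V. \<Sum>w\<in>V. v * w * prob ({\<omega> \<in> space M. X \<omega> = v} \<inter> {\<omega> \<in> space M. Y \<omega> = w}))"
proof -
  let ?A = "\<lambda>v. {\<omega> \<in> space M. X \<omega> = v}" and ?B = "\<lambda>w. {\<omega> \<in> space M. Y \<omega> = w}"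
  have "X \<omega> * Y \<omega> = (\<Sum>v\<in>V. \<Sum>w\<in>V. v * w * indicator (?A v \<inter> ?B w) \<omega>)" if "\<omega> \<in> space M" for \<omega>
  proof -
    have "X \<omega> * Y \<omega> = (\<Sum>v\<in>V. v * indicator (?A v) \<omega>) * (\<Sum>w\<in>V. w * indicator (?B w) \<omega>)"
      using sum_level_indicator[where X = X, OF assms(3) that assms(4)[OF that]]
        sum_level_indicator[where X = Y, OF assms(3) that assms(5)[OF that]] by simp
    also have "\<dots> = (\<Sum>v\<in>V. \<Sum>w\<in>V. (v * indicator (?A v) \<omega>) * (w * indicator (?B w) \<omega>))"
      by (rule sum_product)
    also have "\<dots> = (\<Sum>v\<in>V. \<Sum>w\<in>V. v * w * indicator (?A v \<inter> ?B w) \<omega>)"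
      by (simp add: indicator_inter_arith mult_ac)
    finally show ?thesis .
  qed
  then have "expectation (\<lambda>\<omega>. X \<omega> * Y \<omega>) =
      expectation (\<lambda>\<omega>. \<Sum>v\<in>V. \<Sum>w\<in>V. v * w * indicator (?A v \<inter> ?B w) \<omega>)"
    by (intro Bochner_Integration.integral_cong) auto
  also have "\<dots> = (\<Sum>v\<in>V. \<Sum>w\<in>V. v * w * prob (?A v \<inter> ?B w))"
    by (simp add: Bochner_Integration.integral_sum Bochner_Integration.integrable_sum less_top[symmetric])
  finally show ?thesis .
qed

lemma (in prob_space) abs_covariance_finite_range_le:
  fixes X Y :: "'a \<Rightarrow> real"
  assumes [measurable]: "X \<in> borel_measurable M" "Y \<in> borel_measurable M"
    and V: "finite V" "\<And>\<omega>. \<omega> \<in> space M \<Longrightarrow> X \<omega> \<in> V" "\<And>\<omega>. \<omega> \<in> space M \<Longrightarrow> Y \<omega> \<in> V"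
    and c: "\<And>v. v \<in> V \<Longrightarrow> \<bar>v\<bar> \<le> c"
    and a: "\<And>v w. v \<in> V \<Longrightarrow> w \<in> V \<Longrightarrow>
       \<bar>prob ({\<omega> \<in> space M. X \<omega> = v} \<inter> {\<omega> \<in> space M. Y \<omega> = w})
          - prob {\<omega> \<in> space M. X \<omega> = v} * prob {\<omega> \<in> space M. Y \<omega> = w}\<bar> \<le> a"
  shows "\<bar>expectation (\<lambda>\<omega>. X \<omega> * Y \<omega>) - expectation X * expectation Y\<bar>
    \<le> real (card V) * real (card V) * (c * c * a)"
proof -
  let ?A = "\<lambda>v. {\<omega> \<in> space M. X \<omega> = v}" and ?B = "\<lambda>w. {\<omega> \<in> space M. Y \<omega> = w}"
  let ?d = "\<lambda>v w. v * w * (prob (?A v \<inter> ?B w) - prob (?A v) * prob (?B w))"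
  have "expectation X * expectation Y = (\<Sum>v\<in>V. v * prob (?A v)) * (\<Sum>w\<in>V. w * prob (?B w))"
    by (simp add: expectation_finite_range[OF assms(1) V(1,2)] expectation_finite_range[OF assms(2) V(1,3)])
  also have "\<dots> = (\<Sum>v\<in>V. \<Sum>w\<in>V. (v * prob (?A v)) * (w * prob (?B w)))"
    by (rule sum_product)
  finally have "expectation X * expectation Y = (\<Sum>v\<in>V. \<Sum>w\<in>V. v * w * (prob (?A v) * prob (?B w)))"
    by (simp add: mult_ac)
  then have cov: "expectation (\<lambda>\<omega>. X \<omega> * Y \<omega>) - expectation X * expectation Y = (\<Sum>v\<in>V. \<Sum>w\<in>V. ?d v w)"
    by (simp add: expectation_mult_finite_range[OF assms(1,2) V] sum_subtractf right_diff_distrib)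
  have "\<bar>\<Sum>v\<in>V. \<Sum>w\<in>V. ?d v w\<bar> \<le> (\<Sum>v\<in>V. \<Sum>w\<in>V. \<bar>?d v w\<bar>)"
    by (rule order_trans[OF sum_abs sum_mono[OF sum_abs]])
  also have "\<dots> \<le> (\<Sum>v\<in>V. \<Sum>w\<in>V. c * c * a)"
  proof (intro sum_mono)
    fix v w
    assume "v \<in> V" "w \<in> V"
    then show "\<bar>?d v w\<bar> \<le> c * c * a"
      unfolding abs_mult using c[of v] c[of w] a[of v w] by (intro mult_mono) auto
  qed
  finally show ?thesis
    unfolding cov by simp
qed

definition gen_measure :: "'a measure \<Rightarrow> (int \<Rightarrow> 'a \<Rightarrow> real) \<Rightarrow> int set \<Rightarrow> 'a measure" where
  "gen_measure M e S = sigma (space M) (\<Union>s\<in>S. {e s -` B \<inter> space M | B. B \<in> sets borel})"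

lemma
  shows sets_gen_measure: "sets (gen_measure M e S) = gen_sigma M e S"
    and space_gen_measure: "space (gen_measure M e S) = space M"
  unfolding gen_measure_def gen_sigma_def by (auto intro!: sets_measure_of space_measure_of)

lemma measurable_gen_measure:
  assumes "s \<in> S"
  shows "e s \<in> borel_measurable (gen_measure M e S)"
proof (rule measurableI)
  fix A :: "real set"
  assume "A \<in> sets borel"
  then have "e s -` A \<inter> space M \<in> gen_sigma M e S"
    using assms unfolding gen_sigma_def by (blast intro: sigma_sets.Basic)
  then show "e s -` A \<inter> space (gen_measure M e S) \<in> sets (gen_measure M e S)"
    by (simp add: sets_gen_measure space_gen_measure)
qed (simp add: space_gen_measure)

lemma level_set_in_gen_sigma:
  fixes f :: "real \<times> real \<Rightarrow> real"
  assumes [measurable]: "f \<in> borel_measurable borel" and "s1 \<in> S" "s2 \<in> S"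
  shows "{\<omega> \<in> space M. f (e s1 \<omega>, e s2 \<omega>) = v} \<in> gen_sigma M e S"
proof -
  have [measurable]: "e s1 \<in> borel_measurable (gen_measure M e S)" "e s2 \<in> borel_measurable (gen_measure M e S)"
    using assms(2,3) by (simp_all add: measurable_gen_measure)
  have "{\<omega> \<in> space (gen_measure M e S). f (e s1 \<omega>, e s2 \<omega>) = v} \<in> sets (gen_measure M e S)"
    by measurable
  then show ?thesis
    by (simp add: sets_gen_measure space_gen_measure)
qed

lemma (in prob_space) mixing_coeff_ge:
  assumes "A \<in> gen_sigma M e {..0}" and "B \<in> gen_sigma M e {k..}"
  shows "\<bar>prob (A \<inter> B) - prob A * prob B\<bar> \<le> mixing_coeff M e k"
  unfolding mixing_coeff_def
proof (rule cSUP_upper2[where x = "(A, B)"])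
  show "bdd_above ((\<lambda>AB. \<bar>prob (fst AB \<inter> snd AB) - prob (fst AB) * prob (snd AB)\<bar>) `
      (gen_sigma M e {..0} \<times> gen_sigma M e {k..}))"
  proof (rule bdd_aboveI2[where M = 1])
    fix AB :: "'a set \<times> 'a set"
    have "0 \<le> prob (fst AB \<inter> snd AB)" "prob (fst AB \<inter> snd AB) \<le> 1"
      "0 \<le> prob (fst AB) * prob (snd AB)" "prob (fst AB) * prob (snd AB) \<le> 1"
      by (simp_all add: mult_le_one)
    then show "\<bar>prob (fst AB \<inter> snd AB) - prob (fst AB) * prob (snd AB)\<bar> \<le> 1"
      by linarith
  qed
qed (use assms in simp_all)

section \<open>A weak law of large numbers for strictly stationary mixing processes\<close>

locale stationary_process = prob_space M for M :: "'a measure" +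
  fixes e :: "int \<Rightarrow> 'a \<Rightarrow> real"
  assumes e_measurable[measurable]: "\<And>t. e t \<in> borel_measurable M"
    and stationary: "strictly_stationary M e"
begin

lemma integral_path_shift:
  fixes G :: "(int \<Rightarrow> real) \<Rightarrow> real"
  assumes [measurable]: "G \<in> borel_measurable (Pi\<^sub>M UNIV (\<lambda>_. borel))"
  shows "(\<integral>\<omega>. G (\<lambda>t. e (t + h) \<omega>) \<partial>M) = (\<integral>\<omega>. G (\<lambda>t. e t \<omega>) \<partial>M)"
proof -
  have shift: "(\<lambda>\<omega> t. e (t + k) \<omega>) \<in> measurable M (Pi\<^sub>M UNIV (\<lambda>_. borel))" for k
    by (intro measurable_PiM_single') auto
  have "(\<integral>\<omega>. G (\<lambda>t. e (t + h) \<omega>) \<partial>M) = integral\<^sup>L (distr M (Pi\<^sub>M UNIV (\<lambda>_. borel)) (\<lambda>\<omega> t. e (t + h) \<omega>)) G"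
    by (rule integral_distr[OF shift assms, symmetric])
  also have "\<dots> = integral\<^sup>L (distr M (Pi\<^sub>M UNIV (\<lambda>_. borel)) (\<lambda>\<omega> t. e (t + 0) \<omega>)) G"
    using stationary unfolding strictly_stationary_def by simp
  also have "\<dots> = (\<integral>\<omega>. G (\<lambda>t. e t \<omega>) \<partial>M)"
    using integral_distr[OF shift[of 0] assms] by simp
  finally show ?thesis .
qed

lemma integrable_path_shift:
  fixes G :: "(int \<Rightarrow> real) \<Rightarrow> real"
  assumes [measurable]: "G \<in> borel_measurable (Pi\<^sub>M UNIV (\<lambda>_. borel))"
  shows "integrable M (\<lambda>\<omega>. G (\<lambda>t. e (t + h) \<omega>)) \<longleftrightarrow> integrable M (\<lambda>\<omega>. G (\<lambda>t. e t \<omega>))"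
proof -
  have shift: "(\<lambda>\<omega> t. e (t + k) \<omega>) \<in> measurable M (Pi\<^sub>M UNIV (\<lambda>_. borel))" for k
    by (intro measurable_PiM_single') auto
  have "integrable M (\<lambda>\<omega>. G (\<lambda>t. e (t + h) \<omega>)) \<longleftrightarrow> integrable (distr M (Pi\<^sub>M UNIV (\<lambda>_. borel)) (\<lambda>\<omega> t. e (t + h) \<omega>)) G"
    by (rule integrable_distr_eq[OF shift assms, symmetric])
  also have "\<dots> \<longleftrightarrow> integrable (distr M (Pi\<^sub>M UNIV (\<lambda>_. borel)) (\<lambda>\<omega> t. e (t + 0) \<omega>)) G"
    using stationary unfolding strictly_stationary_def by simp
  also have "\<dots> \<longleftrightarrow> integrable M (\<lambda>\<omega>. G (\<lambda>t. e t \<omega>))"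
    using integrable_distr_eq[OF shift[of 0] assms] by simp
  finally show ?thesis .
qed

lemma integral_lag_shift:
  fixes g :: "real \<times> real \<Rightarrow> real"
  assumes [measurable]: "g \<in> borel_measurable borel"
  shows "(\<integral>\<omega>. g (e t \<omega>, e (t - 1) \<omega>) \<partial>M) = (\<integral>\<omega>. g (e 0 \<omega>, e (- 1) \<omega>) \<partial>M)"
  using integral_path_shift[of "\<lambda>x. g (x 0, x (- 1))" t] by (simp add: add.commute)

lemma integrable_lag_shift:
  fixes g :: "real \<times> real \<Rightarrow> real"
  assumes [measurable]: "g \<in> borel_measurable borel"
  shows "integrable M (\<lambda>\<omega>. g (e t \<omega>, e (t - 1) \<omega>)) \<longleftrightarrow> integrable M (\<lambda>\<omega>. g (e 0 \<omega>, e (- 1) \<omega>))"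
  using integrable_path_shift[of "\<lambda>x. g (x 0, x (- 1))" t] by (simp add: add.commute)

end

locale mixing_process = stationary_process +
  assumes mixing_tendsto_zero: "(\<lambda>k::nat. mixing_coeff M e (int k)) \<longlonglongrightarrow> 0"

locale lag_functional = mixing_process +
  fixes f :: "real \<times> real \<Rightarrow> real"
  assumes f_measurable[measurable]: "f \<in> borel_measurable borel"
    and f_integrable: "integrable M (\<lambda>\<omega>. f (e 0 \<omega>, e (- 1) \<omega>))"
begin

definition Z :: "int \<Rightarrow> 'a \<Rightarrow> real" where
  "Z t \<omega> = f (e t \<omega>, e (t - 1) \<omega>)"

definition Zq :: "nat \<Rightarrow> int \<Rightarrow> 'a \<Rightarrow> real" where
  "Zq n t \<omega> = quantize n (Z t \<omega>)"

definition Zq_mean :: "nat \<Rightarrow> real" where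
  "Zq_mean n = expectation (Zq n 0)"

definition Zq_autocov :: "nat \<Rightarrow> nat \<Rightarrow> real" where
  "Zq_autocov n k = \<bar>expectation (\<lambda>\<omega>. (Zq n 0 \<omega> - Zq_mean n) * (Zq n (int k) \<omega> - Zq_mean n))\<bar>"

definition Zq_centered_sum :: "nat \<Rightarrow> nat \<Rightarrow> 'a \<Rightarrow> real" where
  "Zq_centered_sum n T \<omega> = (\<Sum>t\<in>{1..T}. Zq n (int t) \<omega> - Zq_mean n)"

definition quantize_error_bound :: "nat \<Rightarrow> real \<Rightarrow> real" where
  "quantize_error_bound n x = 1 / real n + (if \<bar>x\<bar> > real n then 2 * \<bar>x\<bar> else 0)"

lemma Z_measurable[measurable]: "Z t \<in> borel_measurable M"
  unfolding Z_def by measurable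

lemma Zq_measurable[measurable]: "Zq n t \<in> borel_measurable M"
  unfolding Zq_def by measurable

lemma Zq_centered_sum_measurable[measurable]: "Zq_centered_sum n T \<in> borel_measurable M"
  unfolding Zq_centered_sum_def by measurable

lemma quantize_error_bound_measurable[measurable]: "quantize_error_bound n \<in> borel_measurable borel"
  unfolding quantize_error_bound_def by measurable

lemma
  fixes \<phi> :: "real \<Rightarrow> real"
  assumes [measurable]: "\<phi> \<in> borel_measurable borel"
  shows integral_Z_shift: "expectation (\<lambda>\<omega>. \<phi> (Z t \<omega>)) = expectation (\<lambda>\<omega>. \<phi> (Z 0 \<omega>))"
    and integrable_Z_shift: "integrable M (\<lambda>\<omega>. \<phi> (Z t \<omega>)) \<longleftrightarrow> integrable M (\<lambda>\<omega>. \<phi> (Z 0 \<omega>))"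
  unfolding Z_def
  using integral_lag_shift[of "\<lambda>p. \<phi> (f p)" t] integrable_lag_shift[of "\<lambda>p. \<phi> (f p)" t] by simp_all

lemma integral_Z_pair_shift:
  fixes g :: "real \<Rightarrow> real"
  assumes [measurable]: "g \<in> borel_measurable borel" and "s \<le> t"
  shows "expectation (\<lambda>\<omega>. g (Z s \<omega>) * g (Z t \<omega>)) = expectation (\<lambda>\<omega>. g (Z 0 \<omega>) * g (Z (t - s) \<omega>))"
  using integral_path_shift[of "\<lambda>x. g (f (x 0, x (- 1))) * g (f (x (t - s), x (t - s - 1)))" s]
  unfolding Z_def by (simp add: algebra_simps)

lemma integrable_Z: "integrable M (Z t)"
  using integrable_Z_shift[of "\<lambda>x. x" t] f_integrable unfolding Z_def by simp

lemma abs_Zq_le: "\<bar>Zq n t \<omega>\<bar> \<le> real n"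
  unfolding Zq_def by (rule abs_quantize_le)

lemma integrable_Zq: "integrable M (Zq n t)"
  by (rule integrable_const_bound[where B = "real n"]) (simp_all add: abs_Zq_le)

lemma expectation_Zq: "expectation (Zq n t) = Zq_mean n"
  unfolding Zq_mean_def Zq_def using integral_Z_shift[of "quantize n" t] by simp

lemma abs_Zq_mean_le: "\<bar>Zq_mean n\<bar> \<le> real n"
proof -
  have "\<bar>Zq_mean n\<bar> \<le> expectation (\<lambda>\<omega>. \<bar>Zq n 0 \<omega>\<bar>)"
    unfolding Zq_mean_def using integral_abs_bound by blast
  also have "\<dots> \<le> expectation (\<lambda>\<omega>. real n)"
    by (intro integral_mono abs_Zq_le integrable_abs integrable_Zq) simp
  finally show ?thesis
    by (simp add: prob_space)
qed

lemma abs_Zq_centered_le: "\<bar>Zq n t \<omega> - Zq_mean n\<bar> \<le> 2 * real n"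
  using abs_Zq_le[of n t \<omega>] abs_Zq_mean_le[of n] by linarith

lemma integrable_Zq_centered_mult: "integrable M (\<lambda>\<omega>. (Zq n s \<omega> - Zq_mean n) * (Zq n t \<omega> - Zq_mean n))"
proof (rule integrable_const_bound[where B = "2 * real n * (2 * real n)"])
  have "\<bar>(Zq n s \<omega> - Zq_mean n) * (Zq n t \<omega> - Zq_mean n)\<bar> \<le> 2 * real n * (2 * real n)" for \<omega>
    unfolding abs_mult by (intro mult_mono abs_Zq_centered_le) auto
  then show "AE \<omega> in M. norm ((Zq n s \<omega> - Zq_mean n) * (Zq n t \<omega> - Zq_mean n)) \<le> 2 * real n * (2 * real n)"
    by simp
qed simp

lemma quantize_error_bound_tendsto_zero:
  "(\<lambda>n. expectation (\<lambda>\<omega>. quantize_error_bound n (Z 0 \<omega>))) \<longlonglongrightarrow> 0"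
proof -
  define tail where "tail n \<omega> = (if \<bar>Z 0 \<omega>\<bar> > real n then 2 * \<bar>Z 0 \<omega>\<bar> else 0)" for n \<omega>
  have [measurable]: "tail n \<in> borel_measurable M" for n
    unfolding tail_def by measurable
  have integrable_tail: "integrable M (tail n)" for n
    by (rule Bochner_Integration.integrable_bound[where f = "\<lambda>\<omega>. 2 * \<bar>Z 0 \<omega>\<bar>"]) (auto simp: tail_def integrable_Z)
  have "(\<lambda>n. expectation (tail n)) \<longlonglongrightarrow> expectation (\<lambda>\<omega>. 0)"
  proof (rule integral_dominated_convergence[where w = "\<lambda>\<omega>. 2 * \<bar>Z 0 \<omega>\<bar>"])
    show "AE \<omega> in M. (\<lambda>n. tail n \<omega>) \<longlonglongrightarrow> 0"
    proof (rule AE_I2)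
      fix \<omega>
      obtain N :: nat where "\<bar>Z 0 \<omega>\<bar> < real N"
        using reals_Archimedean2 by blast
      then have "\<forall>n\<ge>N. \<bar>Z 0 \<omega>\<bar> < real n"
        by (meson less_le_trans of_nat_le_iff)
      then have "eventually (\<lambda>n. \<bar>Z 0 \<omega>\<bar> < real n) sequentially"
        unfolding eventually_sequentially by blast
      then show "(\<lambda>n. tail n \<omega>) \<longlonglongrightarrow> 0"
        unfolding tail_def by (rule tendsto_eventually[OF eventually_mono]) simp
    qed
  qed (auto simp: tail_def integrable_Z)
  moreover have "expectation (\<lambda>\<omega>. quantize_error_bound n (Z 0 \<omega>)) = 1 / real n + expectation (tail n)" for n
    unfolding quantize_error_bound_def tail_def[symmetric] using integrable_tail
    by (simp add: prob_space)
  ultimately show ?thesis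
    using tendsto_add[OF lim_const_over_n[of 1]] by simp
qed

lemma expectation_abs_Z_minus_Zq_le:
  assumes "n \<ge> 1"
  shows "expectation (\<lambda>\<omega>. \<bar>Z t \<omega> - Zq n t \<omega>\<bar>) \<le> expectation (\<lambda>\<omega>. quantize_error_bound n (Z 0 \<omega>))"
proof -
  have "expectation (\<lambda>\<omega>. \<bar>Z t \<omega> - Zq n t \<omega>\<bar>) \<le> expectation (\<lambda>\<omega>. quantize_error_bound n (Z t \<omega>))"
  proof (rule integral_mono)
    show "integrable M (\<lambda>\<omega>. \<bar>Z t \<omega> - Zq n t \<omega>\<bar>)"
      by (intro integrable_abs Bochner_Integration.integrable_diff integrable_Z integrable_Zq)
    show "integrable M (\<lambda>\<omega>. quantize_error_bound n (Z t \<omega>))"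
    proof (rule Bochner_Integration.integrable_bound[where f = "\<lambda>\<omega>. 1 / real n + 2 * \<bar>Z t \<omega>\<bar>"])
      show "integrable M (\<lambda>\<omega>. 1 / real n + 2 * \<bar>Z t \<omega>\<bar>)"
        using integrable_Z by simp
      show "AE \<omega> in M. norm (quantize_error_bound n (Z t \<omega>)) \<le> norm (1 / real n + 2 * \<bar>Z t \<omega>\<bar>)"
        by (intro AE_I2) (simp add: quantize_error_bound_def)
    qed measurable
    show "\<bar>Z t \<omega> - Zq n t \<omega>\<bar> \<le> quantize_error_bound n (Z t \<omega>)" for \<omega>
      unfolding Zq_def quantize_error_bound_def by (rule abs_quantize_error_le[OF assms])
  qed
  also have "\<dots> = expectation (\<lambda>\<omega>. quantize_error_bound n (Z 0 \<omega>))"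
    by (rule integral_Z_shift) measurable
  finally show ?thesis .
qed

lemma Zq_autocov_le_mixing:
  assumes "n \<ge> 1" and "k \<ge> 1"
  shows "Zq_autocov n k \<le>
    real (card (quantize_grid n)) * real (card (quantize_grid n)) * (real n * real n * mixing_coeff M e (int k - 1))"
proof -
  let ?m = "Zq_mean n"
  have "integrable M (\<lambda>\<omega>. Zq n 0 \<omega> * Zq n (int k) \<omega>)"
    by (rule integrable_const_bound[where B = "real n * real n"])
       (simp_all add: abs_mult mult_mono abs_Zq_le)
  moreover have "(\<lambda>\<omega>. (Zq n 0 \<omega> - ?m) * (Zq n (int k) \<omega> - ?m))
      = (\<lambda>\<omega>. Zq n 0 \<omega> * Zq n (int k) \<omega> - (?m * Zq n (int k) \<omega> + ?m * Zq n 0 \<omega>) + ?m * ?m)"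
    by (simp add: fun_eq_iff algebra_simps)
  ultimately have "expectation (\<lambda>\<omega>. (Zq n 0 \<omega> - ?m) * (Zq n (int k) \<omega> - ?m))
      = expectation (\<lambda>\<omega>. Zq n 0 \<omega> * Zq n (int k) \<omega>) - ?m * ?m"
    using integrable_Zq by (simp add: expectation_Zq prob_space)
  moreover have "expectation (Zq n 0) * expectation (Zq n (int k)) = ?m * ?m"
    by (simp add: expectation_Zq)
  moreover have "\<bar>expectation (\<lambda>\<omega>. Zq n 0 \<omega> * Zq n (int k) \<omega>) - expectation (Zq n 0) * expectation (Zq n (int k))\<bar>
      \<le> real (card (quantize_grid n)) * real (card (quantize_grid n)) * (real n * real n * mixing_coeff M e (int k - 1))"
  proof (rule abs_covariance_finite_range_le[OF Zq_measurable Zq_measurable finite_quantize_grid])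
    show "Zq n 0 \<omega> \<in> quantize_grid n" "Zq n (int k) \<omega> \<in> quantize_grid n" for \<omega>
      unfolding Zq_def using assms(1) by (simp_all add: quantize_in_grid)
    show "\<bar>v\<bar> \<le> real n" if "v \<in> quantize_grid n" for v
      using that by (rule abs_le_if_in_quantize_grid)
    have [measurable]: "(\<lambda>p. quantize n (f p)) \<in> borel_measurable borel"
      by measurable
    fix v w
    have "{\<omega> \<in> space M. Zq n 0 \<omega> = v} \<in> gen_sigma M e {..0}"
      using level_set_in_gen_sigma[of "\<lambda>p. quantize n (f p)" 0 "{..0}" "-1"] unfolding Zq_def Z_def by simp
    \<comment> \<open>\<open>Zq n k\<close> also depends on \<open>e (k - 1)\<close>, whence the lag \<open>k - 1\<close>.\<close>
    moreover have "{\<omega> \<in> space M. Zq n (int k) \<omega> = w} \<in> gen_sigma M e {int k - 1..}"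
      using level_set_in_gen_sigma[of "\<lambda>p. quantize n (f p)" "int k" "{int k - 1..}" "int k - 1"]
      unfolding Zq_def Z_def by simp
    ultimately show "\<bar>prob ({\<omega> \<in> space M. Zq n 0 \<omega> = v} \<inter> {\<omega> \<in> space M. Zq n (int k) \<omega> = w})
        - prob {\<omega> \<in> space M. Zq n 0 \<omega> = v} * prob {\<omega> \<in> space M. Zq n (int k) \<omega> = w}\<bar>
        \<le> mixing_coeff M e (int k - 1)"
      by (rule mixing_coeff_ge)
  qed
  ultimately show ?thesis
    unfolding Zq_autocov_def by simp
qed

lemma Zq_autocov_tendsto_zero:
  assumes "n \<ge> 1"
  shows "Zq_autocov n \<longlonglongrightarrow> 0"
proof -
  define C where "C = real (card (quantize_grid n)) * real (card (quantize_grid n)) * (real n * real n)"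
  have "(\<lambda>k. mixing_coeff M e (int (k + 1) - 1)) \<longlonglongrightarrow> 0"
    using mixing_tendsto_zero by simp
  then have lim: "(\<lambda>k::nat. C * mixing_coeff M e (int k - 1)) \<longlonglongrightarrow> 0"
    by (intro tendsto_mult_right_zero) (rule LIMSEQ_offset)
  have "eventually (\<lambda>k. norm (Zq_autocov n k) \<le> C * mixing_coeff M e (int k - 1)) sequentially"
    unfolding eventually_sequentially
  proof (intro exI[of _ 1] allI impI)
    fix k :: nat
    assume "k \<ge> 1"
    then have "Zq_autocov n k \<le> C * mixing_coeff M e (int k - 1)"
      using Zq_autocov_le_mixing[OF assms] unfolding C_def by (simp only: mult.assoc)
    moreover have "Zq_autocov n k \<ge> 0"
      unfolding Zq_autocov_def by simp
    ultimately show "norm (Zq_autocov n k) \<le> C * mixing_coeff M e (int k - 1)"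
      by simp
  qed
  then show ?thesis
    using lim by (rule Lim_null_comparison)
qed

lemma Zq_autocov_le: "Zq_autocov n k \<le> 4 * (real n)\<^sup>2"
proof -
  have "Zq_autocov n k \<le> expectation (\<lambda>\<omega>. \<bar>(Zq n 0 \<omega> - Zq_mean n) * (Zq n (int k) \<omega> - Zq_mean n)\<bar>)"
    unfolding Zq_autocov_def by (rule integral_abs_bound)
  also have "\<dots> \<le> expectation (\<lambda>\<omega>. 2 * real n * (2 * real n))"
  proof (rule integral_mono)
    show "integrable M (\<lambda>\<omega>. \<bar>(Zq n 0 \<omega> - Zq_mean n) * (Zq n (int k) \<omega> - Zq_mean n)\<bar>)"
      by (intro integrable_abs integrable_Zq_centered_mult)
    show "\<bar>(Zq n 0 \<omega> - Zq_mean n) * (Zq n (int k) \<omega> - Zq_mean n)\<bar> \<le> 2 * real n * (2 * real n)" for \<omega>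
      unfolding abs_mult by (intro mult_mono abs_Zq_centered_le) auto
  qed simp
  finally show ?thesis
    by (simp add: prob_space power2_eq_square)
qed

lemma covariance_Zq_le_autocov:
  "expectation (\<lambda>\<omega>. (Zq n (int s) \<omega> - Zq_mean n) * (Zq n (int t) \<omega> - Zq_mean n)) \<le> Zq_autocov n (nat \<bar>int s - int t\<bar>)"
proof -
  have ordered: "expectation (\<lambda>\<omega>. (Zq n (int a) \<omega> - Zq_mean n) * (Zq n (int b) \<omega> - Zq_mean n)) \<le> Zq_autocov n (b - a)"
    if "a \<le> b" for a b
  proof -
    have "expectation (\<lambda>\<omega>. (Zq n (int a) \<omega> - Zq_mean n) * (Zq n (int b) \<omega> - Zq_mean n))
        = expectation (\<lambda>\<omega>. (Zq n 0 \<omega> - Zq_mean n) * (Zq n (int (b - a)) \<omega> - Zq_mean n))"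
      using integral_Z_pair_shift[of "\<lambda>x. quantize n x - Zq_mean n" "int a" "int b"] that
      unfolding Zq_def by (simp add: of_nat_diff)
    then show ?thesis
      unfolding Zq_autocov_def by simp
  qed
  show ?thesis
  proof (cases "s \<le> t")
    case True
    then show ?thesis
      using ordered[of s t] by (simp add: nat_diff_distrib')
  next
    case False
    then show ?thesis
      using ordered[of t s] by (simp add: mult.commute nat_diff_distrib')
  qed
qed

lemma expectation_Zq_centered_sum_sq_le:
  "expectation (\<lambda>\<omega>. (Zq_centered_sum n T \<omega>)\<^sup>2) \<le> (\<Sum>s\<in>{1..T}. \<Sum>t\<in>{1..T}. Zq_autocov n (nat \<bar>int s - int t\<bar>))"
proof -
  have "expectation (\<lambda>\<omega>. (Zq_centered_sum n T \<omega>)\<^sup>2)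
      = (\<Sum>s\<in>{1..T}. \<Sum>t\<in>{1..T}. expectation (\<lambda>\<omega>. (Zq n (int s) \<omega> - Zq_mean n) * (Zq n (int t) \<omega> - Zq_mean n)))"
    unfolding Zq_centered_sum_def power2_eq_square sum_product
    by (subst Bochner_Integration.integral_sum, intro Bochner_Integration.integrable_sum integrable_Zq_centered_mult)
       (intro sum.cong refl Bochner_Integration.integral_sum integrable_Zq_centered_mult)
  also have "\<dots> \<le> (\<Sum>s\<in>{1..T}. \<Sum>t\<in>{1..T}. Zq_autocov n (nat \<bar>int s - int t\<bar>))"
    by (intro sum_mono covariance_Zq_le_autocov)
  finally show ?thesis .
qed

lemma prob_Zq_centered_average_tendsto_zero:
  assumes "n \<ge> 1" and "\<eta> > 0"
  shows "(\<lambda>T. prob {\<omega> \<in> space M. \<bar>Zq_centered_sum n T \<omega> / real T\<bar> \<ge> \<eta>}) \<longlonglongrightarrow> 0"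
proof -
  let ?S = "\<lambda>T. \<Sum>s\<in>{1..T}. \<Sum>t\<in>{1..T}. Zq_autocov n (nat \<bar>int s - int t\<bar>)"
  have le: "prob {\<omega> \<in> space M. \<bar>Zq_centered_sum n T \<omega> / real T\<bar> \<ge> \<eta>} \<le> (?S T / (real T)\<^sup>2) / \<eta>\<^sup>2" for T
  proof -
    have "\<bar>Zq_centered_sum n T \<omega>\<bar> \<le> real T * (2 * real n)" for \<omega>
    proof -
      have "\<bar>Zq_centered_sum n T \<omega>\<bar> \<le> (\<Sum>t\<in>{1..T}. \<bar>Zq n (int t) \<omega> - Zq_mean n\<bar>)"
        unfolding Zq_centered_sum_def by (rule sum_abs)
      also have "\<dots> \<le> (\<Sum>t\<in>{1..T}. 2 * real n)"
        by (intro sum_mono abs_Zq_centered_le)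
      finally show ?thesis
        by simp
    qed
    then have "\<bar>Zq_centered_sum n T \<omega> / real T\<bar> \<le> \<bar>2 * real n\<bar>" for \<omega>
      by (cases "T = 0") (simp_all add: abs_divide divide_le_eq mult.commute)
    then have "(Zq_centered_sum n T \<omega> / real T)\<^sup>2 \<le> (2 * real n)\<^sup>2" for \<omega>
      by (simp only: abs_le_square_iff)
    then have "integrable M (\<lambda>\<omega>. (Zq_centered_sum n T \<omega> / real T)\<^sup>2)"
      by (intro integrable_const_bound[where B = "(2 * real n)\<^sup>2"]) simp_all
    then have "prob {\<omega> \<in> space M. \<bar>Zq_centered_sum n T \<omega> / real T\<bar> \<ge> \<eta>}
        \<le> expectation (\<lambda>\<omega>. (Zq_centered_sum n T \<omega> / real T)\<^sup>2) / \<eta>\<^sup>2"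
      using assms(2) by (intro second_moment_method) simp_all
    also have "expectation (\<lambda>\<omega>. (Zq_centered_sum n T \<omega> / real T)\<^sup>2)
        = expectation (\<lambda>\<omega>. (Zq_centered_sum n T \<omega>)\<^sup>2) / (real T)\<^sup>2"
      by (simp add: power_divide)
    also have "\<dots> \<le> ?S T / (real T)\<^sup>2"
      by (intro divide_right_mono expectation_Zq_centered_sum_sq_le) simp
    finally show ?thesis
      by (simp add: divide_right_mono)
  qed
  have "(\<lambda>T. ?S T / (real T)\<^sup>2) \<longlonglongrightarrow> 0"
    by (rule double_sum_lag_average_tendsto_zero[where B = "4 * (real n)\<^sup>2"])
      (simp add: Zq_autocov_def, rule Zq_autocov_le, rule Zq_autocov_tendsto_zero[OF assms(1)])
  from tendsto_divide[OF this tendsto_const, of "\<eta>\<^sup>2"] assms(2)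
  have lim: "(\<lambda>T. (?S T / (real T)\<^sup>2) / \<eta>\<^sup>2) \<longlonglongrightarrow> 0"
    by simp
  show ?thesis
    by (rule tendsto_sandwich[OF always_eventually always_eventually tendsto_const lim]) (simp, blast intro: le)
qed

lemma abs_Zq_mean_minus_mean_le:
  assumes "n \<ge> 1"
  shows "\<bar>Zq_mean n - expectation (Z 0)\<bar> \<le> expectation (\<lambda>\<omega>. quantize_error_bound n (Z 0 \<omega>))"
proof -
  have "Zq_mean n - expectation (Z 0) = expectation (\<lambda>\<omega>. Zq n 0 \<omega> - Z 0 \<omega>)"
    unfolding Zq_mean_def using integrable_Zq integrable_Z by simp
  moreover have "\<bar>expectation (\<lambda>\<omega>. Zq n 0 \<omega> - Z 0 \<omega>)\<bar> \<le> expectation (\<lambda>\<omega>. \<bar>Z 0 \<omega> - Zq n 0 \<omega>\<bar>)"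
    using integral_abs_bound[of M "\<lambda>\<omega>. Zq n 0 \<omega> - Z 0 \<omega>"] by (simp add: abs_minus_commute)
  ultimately show ?thesis
    using expectation_abs_Z_minus_Zq_le[OF assms, of 0] by linarith
qed

lemma prob_average_quantize_error_ge_le:
  assumes "n \<ge> 1" and "T \<ge> 1" and "\<eta> > 0"
  shows "prob {\<omega> \<in> space M. (\<Sum>t\<in>{1..T}. \<bar>Z (int t) \<omega> - Zq n (int t) \<omega>\<bar>) / real T \<ge> \<eta>}
    \<le> expectation (\<lambda>\<omega>. quantize_error_bound n (Z 0 \<omega>)) / \<eta>"
proof -
  let ?A = "\<lambda>\<omega>. (\<Sum>t\<in>{1..T}. \<bar>Z (int t) \<omega> - Zq n (int t) \<omega>\<bar>) / real T"
  have integrable: "integrable M (\<lambda>\<omega>. \<bar>Z t \<omega> - Zq n t \<omega>\<bar>)" for t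
    by (intro integrable_abs Bochner_Integration.integrable_diff integrable_Z integrable_Zq)
  have "prob {\<omega> \<in> space M. ?A \<omega> \<ge> \<eta>} \<le> expectation ?A / \<eta>"
    using assms(3) integrable
    by (intro integral_Markov_inequality_measure) (auto intro!: sum_nonneg)
  also have "expectation ?A = (\<Sum>t\<in>{1..T}. expectation (\<lambda>\<omega>. \<bar>Z (int t) \<omega> - Zq n (int t) \<omega>\<bar>)) / real T"
    using integrable by (simp add: Bochner_Integration.integral_sum)
  also have "\<dots> \<le> (\<Sum>t\<in>{1..T}. expectation (\<lambda>\<omega>. quantize_error_bound n (Z 0 \<omega>))) / real T"
    by (intro divide_right_mono sum_mono expectation_abs_Z_minus_Zq_le[OF assms(1)]) simp
  also have "\<dots> = expectation (\<lambda>\<omega>. quantize_error_bound n (Z 0 \<omega>))"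
    using assms(2) by simp
  finally show ?thesis
    using assms(3) by (simp add: divide_right_mono)
qed

lemma prob_average_Z_deviation_le:
  assumes "n \<ge> 1" and "T \<ge> 1" and "\<eta> > 0"
    and small: "expectation (\<lambda>\<omega>. quantize_error_bound n (Z 0 \<omega>)) < \<eta>/3"
  shows "prob {\<omega> \<in> space M. dist ((\<Sum>t\<in>{1..T}. Z (int t) \<omega>) / real T) (expectation (Z 0)) > \<eta>}
    \<le> expectation (\<lambda>\<omega>. quantize_error_bound n (Z 0 \<omega>)) / (\<eta>/3)
      + prob {\<omega> \<in> space M. \<bar>Zq_centered_sum n T \<omega> / real T\<bar> \<ge> \<eta>/3}"
proof -
  let ?err = "\<lambda>\<omega>. (\<Sum>t\<in>{1..T}. \<bar>Z (int t) \<omega> - Zq n (int t) \<omega>\<bar>) / real T"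
  have far: "?err \<omega> \<ge> \<eta>/3 \<or> \<bar>Zq_centered_sum n T \<omega> / real T\<bar> \<ge> \<eta>/3"
    if "dist ((\<Sum>t\<in>{1..T}. Z (int t) \<omega>) / real T) (expectation (Z 0)) > \<eta>" for \<omega>
  proof -
    have "(\<Sum>t\<in>{1..T}. Z (int t) \<omega>) =
        (\<Sum>t\<in>{1..T}. Z (int t) \<omega> - Zq n (int t) \<omega>) + Zq_centered_sum n T \<omega> + real T * Zq_mean n"
      unfolding Zq_centered_sum_def by (simp add: sum_subtractf)
    then have "(\<Sum>t\<in>{1..T}. Z (int t) \<omega>) / real T - expectation (Z 0) =
        (\<Sum>t\<in>{1..T}. Z (int t) \<omega> - Zq n (int t) \<omega>) / real T + Zq_centered_sum n T \<omega> / real T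
          + (Zq_mean n - expectation (Z 0))"
      using assms(2) by (simp add: add_divide_distrib)
    moreover have "\<bar>(\<Sum>t\<in>{1..T}. Z (int t) \<omega> - Zq n (int t) \<omega>) / real T\<bar> \<le> ?err \<omega>"
      by (simp add: abs_divide divide_right_mono sum_abs)
    moreover have "\<bar>Zq_mean n - expectation (Z 0)\<bar> < \<eta>/3"
      using abs_Zq_mean_minus_mean_le[OF assms(1)] small by linarith
    ultimately show ?thesis
      using that unfolding dist_real_def by linarith
  qed
  have events: "{\<omega> \<in> space M. ?err \<omega> \<ge> \<eta>/3} \<in> events"
    "{\<omega> \<in> space M. \<bar>Zq_centered_sum n T \<omega> / real T\<bar> \<ge> \<eta>/3} \<in> events"
    by measurable
  have "{\<omega> \<in> space M. dist ((\<Sum>t\<in>{1..T}. Z (int t) \<omega>) / real T) (expectation (Z 0)) > \<eta>}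
      \<subseteq> {\<omega> \<in> space M. ?err \<omega> \<ge> \<eta>/3} \<union> {\<omega> \<in> space M. \<bar>Zq_centered_sum n T \<omega> / real T\<bar> \<ge> \<eta>/3}"
    using far by auto
  then have "prob {\<omega> \<in> space M. dist ((\<Sum>t\<in>{1..T}. Z (int t) \<omega>) / real T) (expectation (Z 0)) > \<eta>}
      \<le> prob ({\<omega> \<in> space M. ?err \<omega> \<ge> \<eta>/3} \<union> {\<omega> \<in> space M. \<bar>Zq_centered_sum n T \<omega> / real T\<bar> \<ge> \<eta>/3})"
    using events by (intro finite_measure_mono) auto
  also have "\<dots> \<le> prob {\<omega> \<in> space M. ?err \<omega> \<ge> \<eta>/3} + prob {\<omega> \<in> space M. \<bar>Zq_centered_sum n T \<omega> / real T\<bar> \<ge> \<eta>/3}"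
    by (rule measure_Un_le[OF events])
  also have "prob {\<omega> \<in> space M. ?err \<omega> \<ge> \<eta>/3} \<le> expectation (\<lambda>\<omega>. quantize_error_bound n (Z 0 \<omega>)) / (\<eta>/3)"
    using assms(1-3) by (intro prob_average_quantize_error_ge_le) simp_all
  finally show ?thesis
    by simp
qed

lemma average_Z_conv_prob:
  "conv_prob M (\<lambda>T \<omega>. (\<Sum>t\<in>{1..T}. Z (int t) \<omega>) / real T) (expectation (Z 0))"
  unfolding conv_prob_def
proof (intro conjI allI impI)
  show "(\<lambda>\<omega>. (\<Sum>t\<in>{1..T}. Z (int t) \<omega>) / real T) \<in> borel_measurable M" for T
    by measurable
  fix \<eta> :: real
  assume "\<eta> > 0"
  let ?u = "\<lambda>n. expectation (\<lambda>\<omega>. quantize_error_bound n (Z 0 \<omega>))"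
  show "(\<lambda>T. prob {\<omega> \<in> space M. dist ((\<Sum>t\<in>{1..T}. Z (int t) \<omega>) / real T) (expectation (Z 0)) > \<eta>}) \<longlonglongrightarrow> 0"
  proof (rule LIMSEQ_I)
    fix r :: real
    assume "r > 0"
    have "min (\<eta>/3) (r * \<eta> / 6) > 0"
      using \<open>\<eta> > 0\<close> \<open>r > 0\<close> by simp
    from order_tendstoD(2)[OF quantize_error_bound_tendsto_zero this]
    have "eventually (\<lambda>n. ?u n < min (\<eta>/3) (r * \<eta> / 6)) sequentially" .
    then obtain n0 where "\<forall>n\<ge>n0. ?u n < min (\<eta>/3) (r * \<eta> / 6)"
      unfolding eventually_sequentially by blast
    then have "?u (max 1 n0) < \<eta>/3" "?u (max 1 n0) < r * \<eta> / 6"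
      by simp_all
    then obtain n where "n \<ge> 1" and small: "?u n < \<eta>/3" and "?u n < r * \<eta> / 6"
      by (meson max.cobounded1)
    then have u: "?u n / (\<eta>/3) < r/2"
      using \<open>\<eta> > 0\<close> by (simp add: field_simps)
    obtain N where N: "\<And>T. T \<ge> N \<Longrightarrow> prob {\<omega> \<in> space M. \<bar>Zq_centered_sum n T \<omega> / real T\<bar> \<ge> \<eta>/3} < r/2"
      using LIMSEQ_D[OF prob_Zq_centered_average_tendsto_zero[OF \<open>n \<ge> 1\<close>], of "\<eta>/3" "r/2"] \<open>\<eta> > 0\<close> \<open>r > 0\<close>
      by auto
    have "prob {\<omega> \<in> space M. dist ((\<Sum>t\<in>{1..T}. Z (int t) \<omega>) / real T) (expectation (Z 0)) > \<eta>} < r"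
      if "T \<ge> max 1 N" for T
    proof -
      have "T \<ge> 1" "T \<ge> N"
        using that by simp_all
      then show ?thesis
        using prob_average_Z_deviation_le[OF \<open>n \<ge> 1\<close> \<open>T \<ge> 1\<close> \<open>\<eta> > 0\<close> small] N[of T] u by linarith
    qed
    then show "\<exists>N. \<forall>T\<ge>N. norm (prob {\<omega> \<in> space M. dist ((\<Sum>t\<in>{1..T}. Z (int t) \<omega>) / real T) (expectation (Z 0)) > \<eta>} - 0) < r"
      by (intro exI[of _ "max 1 N"]) simp
  qed
qed

end

lemma (in mixing_process) lag_average_conv_prob:
  fixes f :: "real \<times> real \<Rightarrow> real"
  assumes "f \<in> borel_measurable borel" and "integrable M (\<lambda>\<omega>. f (e 0 \<omega>, e (- 1) \<omega>))"
  shows "conv_prob M (\<lambda>T \<omega>. (\<Sum>t\<in>{1..T}. f (e (int t) \<omega>, e (int t - 1) \<omega>)) / real T)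
    (expectation (\<lambda>\<omega>. f (e 0 \<omega>, e (- 1) \<omega>)))"
proof -
  interpret lag_functional M e f
    by unfold_locales (fact assms)+
  show ?thesis
    using average_Z_conv_prob unfolding Z_def by simp
qed

section \<open>Residual autocorrelation in the linear model\<close>

lemma (in finite_measure) integrable_square_if_integrable_abs_powr:
  fixes f :: "'a \<Rightarrow> real"
  assumes [measurable]: "f \<in> borel_measurable M"
    and "integrable M (\<lambda>\<omega>. \<bar>f \<omega>\<bar> powr r)" and "r \<ge> 2"
  shows "integrable M (\<lambda>\<omega>. (f \<omega>)\<^sup>2)"
proof (rule Bochner_Integration.integrable_bound[where f = "\<lambda>\<omega>. 1 + \<bar>f \<omega>\<bar> powr r"])
  show "integrable M (\<lambda>\<omega>. 1 + \<bar>f \<omega>\<bar> powr r)"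
    using assms(2) by simp
  have "(f \<omega>)\<^sup>2 \<le> 1 + \<bar>f \<omega>\<bar> powr r" for \<omega>
  proof (cases "\<bar>f \<omega>\<bar> \<le> 1")
    case True
    then show ?thesis
      using abs_square_le_1[of "f \<omega>"] by (simp add: add_increasing2)
  next
    case False
    then have "(f \<omega>)\<^sup>2 = \<bar>f \<omega>\<bar> powr 2"
      by (simp add: powr_numeral)
    also have "\<dots> \<le> \<bar>f \<omega>\<bar> powr r"
      using False assms(3) by (intro powr_mono) auto
    finally show ?thesis
      by simp
  qed
  then show "AE \<omega> in M. norm ((f \<omega>)\<^sup>2) \<le> norm (1 + \<bar>f \<omega>\<bar> powr r)"
    by simp
qed measurable

lemma (in prob_space) norm_square_moments_if_component_moments:
  fixes X :: "int \<Rightarrow> 'a \<Rightarrow> real^'k"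
  assumes integrable: "\<And>t i. integrable M (\<lambda>\<omega>. X t \<omega> $ i * X t \<omega> $ i)"
    and mean: "\<And>t i. expectation (\<lambda>\<omega>. X t \<omega> $ i * X t \<omega> $ i) = expectation (\<lambda>\<omega>. X 0 \<omega> $ i * X 0 \<omega> $ i)"
  shows "integrable M (\<lambda>\<omega>. (norm (X t \<omega>))\<^sup>2)"
    and "bdd_above (range (\<lambda>t. expectation (\<lambda>\<omega>. (norm (X t \<omega>))\<^sup>2)))"
proof -
  have norm_square: "(norm (x :: real^'k))\<^sup>2 = (\<Sum>i\<in>UNIV. x $ i * x $ i)" for x
    by (simp add: power2_norm_eq_inner inner_vec_def)
  show "integrable M (\<lambda>\<omega>. (norm (X t \<omega>))\<^sup>2)"
    unfolding norm_square using integrable by simp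
  have "expectation (\<lambda>\<omega>. (norm (X t \<omega>))\<^sup>2) = expectation (\<lambda>\<omega>. (norm (X 0 \<omega>))\<^sup>2)" for t
    unfolding norm_square using integrable
    by (simp add: Bochner_Integration.integral_sum) (intro sum.cong refl mean)
  then show "bdd_above (range (\<lambda>t. expectation (\<lambda>\<omega>. (norm (X t \<omega>))\<^sup>2)))"
    by (intro bdd_aboveI2 order_eq_refl)
qed

locale regression_model = mixing_process M e for M :: "'a measure" and e +
  fixes X :: "int \<Rightarrow> 'a \<Rightarrow> real^'k" and y :: "int \<Rightarrow> 'a \<Rightarrow> real" and \<beta> :: "real^'k"
  assumes model: "\<And>t \<omega>. \<omega> \<in> space M \<Longrightarrow> y t \<omega> = X t \<omega> \<bullet> \<beta> + e t \<omega>"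
    and X_measurable[measurable]: "\<And>t. X t \<in> borel_measurable M"
    and e_zero_mean: "\<And>t. expectation (e t) = 0"
    and e_square_integrable: "integrable M (\<lambda>\<omega>. (e 0 \<omega>)\<^sup>2)"
    and X_square_integrable: "\<And>t. integrable M (\<lambda>\<omega>. (norm (X t \<omega>))\<^sup>2)"
    and X_second_moment_bounded: "bdd_above (range (\<lambda>t. expectation (\<lambda>\<omega>. (norm (X t \<omega>))\<^sup>2)))"
    and ols_consistent: "conv_prob M (\<lambda>T. ols X y T) \<beta>"
    and acov_0_nonzero: "acov M e 0 \<noteq> 0"
begin

lemma y_measurable[measurable]: "y t \<in> borel_measurable M"
proof -
  have "(\<lambda>\<omega>. X t \<omega> \<bullet> \<beta> + e t \<omega>) \<in> borel_measurable M"
    by measurable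
  then show ?thesis
    by (rule measurable_cong[THEN iffD1, rotated]) (simp add: model)
qed

lemma ols_measurable[measurable]: "ols X y T \<in> borel_measurable M"
  using ols_consistent by (rule conv_prob_measurable)

lemma resid_measurable[measurable]: "resid X y T t \<in> borel_measurable M"
  unfolding resid_def by measurable

lemma resid_eq: "\<omega> \<in> space M \<Longrightarrow> resid X y T t \<omega> = e t \<omega> + X t \<omega> \<bullet> (\<beta> - ols X y T \<omega>)"
  unfolding resid_def by (simp add: model inner_diff_right)

lemma integrable_e_square: "integrable M (\<lambda>\<omega>. (e t \<omega>)\<^sup>2)"
proof -
  have "(\<lambda>p::real \<times> real. (fst p)\<^sup>2) \<in> borel_measurable borel"
    by (intro borel_measurable_continuous_onI continuous_intros)
  then show ?thesis
    using integrable_lag_shift[of "\<lambda>p. (fst p)\<^sup>2" t] e_square_integrable by simp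
qed

lemma expectation_e_square: "expectation (\<lambda>\<omega>. (e t \<omega>)\<^sup>2) = acov M e 0"
proof -
  have "(\<lambda>p::real \<times> real. (fst p)\<^sup>2) \<in> borel_measurable borel"
    by (intro borel_measurable_continuous_onI continuous_intros)
  then show ?thesis
    using integral_lag_shift[of "\<lambda>p. (fst p)\<^sup>2" t] by (simp add: acov_def power2_eq_square)
qed

lemma integrable_e: "integrable M (e t)"
  by (rule square_integrable_imp_integrable[OF e_measurable integrable_e_square])

lemma integrable_e_mult: "integrable M (\<lambda>\<omega>. e s \<omega> * e t \<omega>)"
proof (rule Bochner_Integration.integrable_bound[where f = "\<lambda>\<omega>. (e s \<omega>)\<^sup>2 + (e t \<omega>)\<^sup>2"])
  show "integrable M (\<lambda>\<omega>. (e s \<omega>)\<^sup>2 + (e t \<omega>)\<^sup>2)"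
    by (intro Bochner_Integration.integrable_add integrable_e_square)
  have "\<bar>e s \<omega> * e t \<omega>\<bar> \<le> (e s \<omega>)\<^sup>2 + (e t \<omega>)\<^sup>2" for \<omega>
  proof -
    have "2 * (\<bar>e s \<omega>\<bar> * \<bar>e t \<omega>\<bar>) \<le> (e s \<omega>)\<^sup>2 + (e t \<omega>)\<^sup>2"
      using sum_squares_bound[of "\<bar>e s \<omega>\<bar>" "\<bar>e t \<omega>\<bar>"] by (simp add: mult.assoc)
    moreover have "0 \<le> \<bar>e s \<omega>\<bar> * \<bar>e t \<omega>\<bar>"
      by simp
    ultimately show ?thesis
      unfolding abs_mult by linarith
  qed
  then show "AE \<omega> in M. norm (e s \<omega> * e t \<omega>) \<le> norm ((e s \<omega>)\<^sup>2 + (e t \<omega>)\<^sup>2)"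
    by simp
qed measurable

lemma expectation_e_lag_mult: "expectation (\<lambda>\<omega>. e t \<omega> * e (t - 1) \<omega>) = acov M e 1"
proof -
  have "(\<lambda>p::real \<times> real. fst p * snd p) \<in> borel_measurable borel"
    by (intro borel_measurable_continuous_onI continuous_intros)
  then show ?thesis
    using integral_lag_shift[of "\<lambda>p. fst p * snd p" t] by (simp add: acov_def)
qed

lemma innovation_moments:
  fixes \<rho> :: real
  defines "\<rho> \<equiv> acov M e 1 / acov M e 0"
  shows "expectation (\<lambda>\<omega>. e (t + 1) \<omega> - \<rho> * e t \<omega>) = 0"
    and "expectation (\<lambda>\<omega>. (e (t + 1) \<omega> - \<rho> * e t \<omega>)\<^sup>2) = acov M e 0 * (1 - \<rho>\<^sup>2)"
proof -
  show "expectation (\<lambda>\<omega>. e (t + 1) \<omega> - \<rho> * e t \<omega>) = 0"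
    using integrable_e by (simp add: e_zero_mean)
  have "(\<lambda>\<omega>. (e (t + 1) \<omega> - \<rho> * e t \<omega>)\<^sup>2)
      = (\<lambda>\<omega>. (e (t + 1) \<omega>)\<^sup>2 - 2 * \<rho> * (e (t + 1) \<omega> * e t \<omega>) + \<rho>\<^sup>2 * (e t \<omega>)\<^sup>2)"
    by (simp add: fun_eq_iff power2_eq_square algebra_simps)
  then have "expectation (\<lambda>\<omega>. (e (t + 1) \<omega> - \<rho> * e t \<omega>)\<^sup>2)
      = acov M e 0 - 2 * \<rho> * acov M e 1 + \<rho>\<^sup>2 * acov M e 0"
    using expectation_e_lag_mult[of "t + 1"]
    by (simp add: integrable_e_square integrable_e_mult expectation_e_square)
  also have "\<dots> = acov M e 0 * (1 - \<rho>\<^sup>2)"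
    unfolding \<rho>_def using acov_0_nonzero by (simp add: field_simps power2_eq_square)
  finally show "expectation (\<lambda>\<omega>. (e (t + 1) \<omega> - \<rho> * e t \<omega>)\<^sup>2) = acov M e 0 * (1 - \<rho>\<^sup>2)" .
qed

definition est_error :: "nat \<Rightarrow> 'a \<Rightarrow> real" where
  "est_error T \<omega> = norm (\<beta> - ols X y T \<omega>) + (norm (\<beta> - ols X y T \<omega>))\<^sup>2"

text \<open>The factor 2 lets one weight dominate the perturbation of the lagged residual products
  and of the squared residuals alike.\<close>

definition lag_weight :: "int \<Rightarrow> 'a \<Rightarrow> real" where
  "lag_weight t \<omega> = 2 * ((e (t - 1) \<omega>)\<^sup>2 + (e t \<omega>)\<^sup>2 + (norm (X (t - 1) \<omega>))\<^sup>2 + (norm (X t \<omega>))\<^sup>2)"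

lemma est_error_measurable[measurable]: "est_error T \<in> borel_measurable M"
  unfolding est_error_def by measurable

lemma lag_weight_measurable[measurable]: "lag_weight t \<in> borel_measurable M"
  unfolding lag_weight_def by measurable

lemma norm_ols_error_conv_prob: "conv_prob M (\<lambda>T \<omega>. norm (\<beta> - ols X y T \<omega>)) 0"
  using conv_prob_isCont[OF ols_consistent, of "\<lambda>v. norm (\<beta> - v)"]
  by (simp add: continuous_intros)

lemma est_error_conv_prob: "conv_prob M est_error 0"
  using conv_prob_add[OF norm_ols_error_conv_prob conv_prob_mult[OF norm_ols_error_conv_prob norm_ols_error_conv_prob]]
  unfolding est_error_def by (simp add: power2_eq_square)

lemma norm_X_bounded_in_prob: "bounded_in_prob M (\<lambda>T \<omega>. norm (X (\<tau> T) \<omega>))"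
proof -
  obtain B where "\<And>t. expectation (\<lambda>\<omega>. (norm (X t \<omega>))\<^sup>2) \<le> B"
    using X_second_moment_bounded by (auto simp: bdd_above_def)
  then show ?thesis
    by (intro bounded_in_prob_if_expectation_square_le X_square_integrable) simp_all
qed

lemma X_ols_error_conv_prob: "conv_prob M (\<lambda>T \<omega>. X (\<tau> T) \<omega> \<bullet> (\<beta> - ols X y T \<omega>)) 0"
proof (rule conv_prob_dist_le)
  show "conv_prob M (\<lambda>T \<omega>. norm (X (\<tau> T) \<omega>) * norm (\<beta> - ols X y T \<omega>)) 0"
    by (intro bounded_in_prob_mult_conv_prob_zero norm_X_bounded_in_prob norm_ols_error_conv_prob) simp
  show "dist (X (\<tau> T) \<omega> \<bullet> (\<beta> - ols X y T \<omega>)) 0 \<le> dist (norm (X (\<tau> T) \<omega>) * norm (\<beta> - ols X y T \<omega>)) 0" for T \<omega>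
    by (simp add: Cauchy_Schwarz_ineq2)
qed measurable

lemma abs_resid_lag_mult_diff_le:
  assumes "\<omega> \<in> space M"
  shows "\<bar>resid X y T (t - 1) \<omega> * resid X y T t \<omega> - e t \<omega> * e (t - 1) \<omega>\<bar> \<le> est_error T \<omega> * lag_weight t \<omega>"
proof -
  let ?d = "norm (\<beta> - ols X y T \<omega>)"
  have "\<bar>resid X y T (t - 1) \<omega> * resid X y T t \<omega> - e (t - 1) \<omega> * e t \<omega>\<bar>
      \<le> (?d + ?d\<^sup>2) * ((e (t - 1) \<omega>)\<^sup>2 + (e t \<omega>)\<^sup>2 + (norm (X (t - 1) \<omega>))\<^sup>2 + (norm (X t \<omega>))\<^sup>2)"
    unfolding resid_eq[OF assms] by (intro abs_perturbed_product_le norm_ge_zero Cauchy_Schwarz_ineq2)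
  also have "\<dots> \<le> est_error T \<omega> * lag_weight t \<omega>"
    unfolding est_error_def lag_weight_def by (intro mult_left_mono) simp_all
  finally show ?thesis
    by (simp add: mult.commute)
qed

lemma abs_resid_square_diff_le:
  assumes "\<omega> \<in> space M"
  shows "\<bar>(resid X y T (t - 1) \<omega>)\<^sup>2 - (e (t - 1) \<omega>)\<^sup>2\<bar> \<le> est_error T \<omega> * lag_weight t \<omega>"
proof -
  let ?d = "norm (\<beta> - ols X y T \<omega>)"
  have "\<bar>(resid X y T (t - 1) \<omega>)\<^sup>2 - (e (t - 1) \<omega>)\<^sup>2\<bar>
      \<le> (?d + ?d\<^sup>2) * ((e (t - 1) \<omega>)\<^sup>2 + (e (t - 1) \<omega>)\<^sup>2 + (norm (X (t - 1) \<omega>))\<^sup>2 + (norm (X (t - 1) \<omega>))\<^sup>2)"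
    using abs_perturbed_product_le[where a = "e (t - 1) \<omega>" and b = "e (t - 1) \<omega>"
        and p = "X (t - 1) \<omega> \<bullet> (\<beta> - ols X y T \<omega>)" and q = "X (t - 1) \<omega> \<bullet> (\<beta> - ols X y T \<omega>)"
        and x = "norm (X (t - 1) \<omega>)" and y = "norm (X (t - 1) \<omega>)" and d = ?d]
    unfolding resid_eq[OF assms] by (simp add: Cauchy_Schwarz_ineq2 power2_eq_square)
  also have "\<dots> \<le> est_error T \<omega> * lag_weight t \<omega>"
    unfolding est_error_def lag_weight_def by (intro mult_left_mono) simp_all
  finally show ?thesis .
qed

lemma average_lag_weight_bounded_in_prob:
  "bounded_in_prob M (\<lambda>T \<omega>. (\<Sum>t\<in>{1..T}. lag_weight (int t) \<omega>) / real T)"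
proof -
  obtain B where B: "\<And>t. expectation (\<lambda>\<omega>. (norm (X t \<omega>))\<^sup>2) \<le> B"
    using X_second_moment_bounded by (auto simp: bdd_above_def)
  have integrable: "integrable M (lag_weight t)" for t
    unfolding lag_weight_def by (intro integrable_mult_right Bochner_Integration.integrable_add
        integrable_e_square X_square_integrable)
  define C where "C = 4 * (acov M e 0 + B)"
  have mean_le: "expectation (lag_weight t) \<le> C" for t
    unfolding lag_weight_def C_def using B[of t] B[of "t - 1"]
    by (simp add: integrable_e_square X_square_integrable expectation_e_square)
  have nonneg: "lag_weight t \<omega> \<ge> 0" for t \<omega>
    unfolding lag_weight_def by simp
  have "expectation (\<lambda>\<omega>. \<bar>(\<Sum>t\<in>{1..T}. lag_weight (int t) \<omega>) / real T\<bar>) \<le> C" for T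
  proof (cases "T = 0")
    case True
    have "0 \<le> expectation (lag_weight 0)"
      using nonneg by (simp add: Bochner_Integration.integral_nonneg)
    then show ?thesis
      using True mean_le[of 0] by simp
  next
    case False
    have "expectation (\<lambda>\<omega>. \<bar>(\<Sum>t\<in>{1..T}. lag_weight (int t) \<omega>) / real T\<bar>)
        = (\<Sum>t\<in>{1..T}. expectation (lag_weight (int t))) / real T"
      using nonneg integrable by (simp add: sum_nonneg Bochner_Integration.integral_sum)
    also have "\<dots> \<le> (\<Sum>t\<in>{1..T}. C) / real T"
      by (intro divide_right_mono sum_mono mean_le) simp
    also have "\<dots> = C"
      using False by simp
    finally show ?thesis .
  qed
  then show ?thesis
    using integrable by (intro bounded_in_prob_if_expectation_abs_le) auto
qed

lemma conv_prob_resid_average: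
  assumes lim: "conv_prob M (\<lambda>T \<omega>. (\<Sum>t\<in>{1..T}. a t \<omega>) / real T) c"
    and [measurable]: "\<And>T t. r T t \<in> borel_measurable M"
    and close: "\<And>T t \<omega>. \<omega> \<in> space M \<Longrightarrow> \<bar>r T t \<omega> - a t \<omega>\<bar> \<le> est_error T \<omega> * lag_weight (int t) \<omega>"
  shows "conv_prob M (\<lambda>T \<omega>. (\<Sum>t\<in>{1..T}. r T t \<omega>) / real T) c"
proof (rule conv_prob_perturb[OF lim average_lag_weight_bounded_in_prob _ est_error_conv_prob])
  fix T \<omega>
  assume "\<omega> \<in> space M"
  have "\<bar>(\<Sum>t\<in>{1..T}. r T t \<omega>) - (\<Sum>t\<in>{1..T}. a t \<omega>)\<bar> \<le> (\<Sum>t\<in>{1..T}. \<bar>r T t \<omega> - a t \<omega>\<bar>)"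
    unfolding sum_subtractf[symmetric] by (rule sum_abs)
  also have "\<dots> \<le> (\<Sum>t\<in>{1..T}. est_error T \<omega> * lag_weight (int t) \<omega>)"
    using close[OF \<open>\<omega> \<in> space M\<close>] by (rule sum_mono)
  finally show "\<bar>(\<Sum>t\<in>{1..T}. r T t \<omega>) / real T - (\<Sum>t\<in>{1..T}. a t \<omega>) / real T\<bar>
      \<le> (\<Sum>t\<in>{1..T}. lag_weight (int t) \<omega>) / real T * est_error T \<omega>"
    by (simp add: sum_distrib_left abs_divide divide_right_mono mult.commute flip: diff_divide_distrib)
qed measurable

lemma rho_hat_eq_average_ratio:
  "rho_hat X y T \<omega> =
    ((\<Sum>t\<in>{1..T}. resid X y T (int t - 1) \<omega> * resid X y T (int t) \<omega>) / real T) /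
    ((\<Sum>t\<in>{1..T}. (resid X y T (int t - 1) \<omega>)\<^sup>2) / real T)"
proof -
  have "{1..int T} = int ` {1..T}"
    by (simp add: image_int_atLeastAtMost)
  then have "(\<Sum>t\<in>{1..int T}. g t) = (\<Sum>t\<in>{1..T}. g (int t))" for g :: "int \<Rightarrow> real"
    by (simp add: sum.reindex)
  then show ?thesis
    unfolding rho_hat_def by (cases "T = 0") simp_all
qed

lemma rho_hat_conv_prob: "conv_prob M (rho_hat X y) (acov M e 1 / acov M e 0)"
proof -
  have [measurable]: "(\<lambda>p::real \<times> real. fst p * snd p) \<in> borel_measurable borel"
    "(\<lambda>p::real \<times> real. (snd p)\<^sup>2) \<in> borel_measurable borel"
    by (intro borel_measurable_continuous_onI continuous_intros)+
  have "conv_prob M (\<lambda>T \<omega>. (\<Sum>t\<in>{1..T}. e (int t) \<omega> * e (int t - 1) \<omega>) / real T) (acov M e 1)"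
    using lag_average_conv_prob[of "\<lambda>p. fst p * snd p"] expectation_e_lag_mult[of 0]
    by (simp add: integrable_e_mult)
  then have numerator: "conv_prob M (\<lambda>T \<omega>. (\<Sum>t\<in>{1..T}. resid X y T (int t - 1) \<omega> * resid X y T (int t) \<omega>) / real T)
      (acov M e 1)"
    by (rule conv_prob_resid_average) (simp_all add: abs_resid_lag_mult_diff_le[where t = "int _", simplified])
  have "conv_prob M (\<lambda>T \<omega>. (\<Sum>t\<in>{1..T}. (e (int t - 1) \<omega>)\<^sup>2) / real T) (acov M e 0)"
    using lag_average_conv_prob[of "\<lambda>p. (snd p)\<^sup>2"] expectation_e_square[of "- 1"]
    by (simp add: integrable_e_square)
  then have denominator: "conv_prob M (\<lambda>T \<omega>. (\<Sum>t\<in>{1..T}. (resid X y T (int t - 1) \<omega>)\<^sup>2) / real T) (acov M e 0)"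
    by (rule conv_prob_resid_average) (simp_all add: abs_resid_square_diff_le[where t = "int _", simplified])
  show ?thesis
    using conv_prob_divide[OF numerator denominator acov_0_nonzero]
    unfolding rho_hat_eq_average_ratio[abs_def] .
qed

lemma pred_error_conv_prob:
  "conv_prob M (\<lambda>T \<omega>. (y (int T + 1) \<omega> - pred X y T \<omega>) - e (int T + 1) \<omega>) 0"
  by (rule conv_prob_cong[OF X_ols_error_conv_prob[of "\<lambda>T. int T + 1"]])
    (simp_all add: pred_def model inner_diff_right)

lemma pred_plus_error_conv_prob:
  defines "\<rho> \<equiv> acov M e 1 / acov M e 0"
  shows "conv_prob M (\<lambda>T \<omega>. (y (int T + 1) \<omega> - pred_plus X y T \<omega>) - (e (int T + 1) \<omega> - \<rho> * e (int T) \<omega>)) 0"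
proof -
  have "bounded_in_prob M (\<lambda>T. e (int T))"
    by (intro bounded_in_prob_if_expectation_square_le[where B = "acov M e 0"])
      (simp_all add: integrable_e_square expectation_e_square)
  then have "conv_prob M (\<lambda>T \<omega>. e (int T) \<omega> * (\<rho> - rho_hat X y T \<omega>)) 0"
    using conv_prob_diff[OF conv_prob_const[where c = \<rho>] rho_hat_conv_prob[folded \<rho>_def]]
    by (intro bounded_in_prob_mult_conv_prob_zero) simp_all
  moreover have "conv_prob M (\<lambda>T \<omega>. rho_hat X y T \<omega> * (X (int T) \<omega> \<bullet> (\<beta> - ols X y T \<omega>))) 0"
    using conv_prob_mult[OF rho_hat_conv_prob X_ols_error_conv_prob[of int]] by simp
  ultimately have "conv_prob M (\<lambda>T \<omega>. X (int T + 1) \<omega> \<bullet> (\<beta> - ols X y T \<omega>)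
      - rho_hat X y T \<omega> * (X (int T) \<omega> \<bullet> (\<beta> - ols X y T \<omega>)) + e (int T) \<omega> * (\<rho> - rho_hat X y T \<omega>)) 0"
    using conv_prob_add[OF conv_prob_diff[OF X_ols_error_conv_prob[of "\<lambda>T. int T + 1"]]] by fastforce
  then show ?thesis
  proof (rule conv_prob_cong)
    show "(\<lambda>\<omega>. (y (int T + 1) \<omega> - pred_plus X y T \<omega>) - (e (int T + 1) \<omega> - \<rho> * e (int T) \<omega>))
        \<in> borel_measurable M" for T
      unfolding pred_plus_def pred_def rho_hat_def by measurable
  qed (simp add: pred_plus_def pred_def resid_eq model inner_diff_right algebra_simps)
qed

end

theorem lemma1:
  fixes M :: "'a measure" and e y :: "int \<Rightarrow> 'a \<Rightarrow> real"
    and X :: "int \<Rightarrow> 'a \<Rightarrow> real^'k" and \<beta> :: "real^'k"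
  assumes P: "prob_space M"
    and model: "\<forall>t. \<forall>\<omega>\<in>space M. y t \<omega> = X t \<omega> \<bullet> \<beta> + e t \<omega>"
    and e_meas: "\<forall>t. e t \<in> borel_measurable M"
    and X_meas: "\<forall>t. X t \<in> borel_measurable M"
    and moments_mixing: "\<exists>r>2. (\<forall>t. integrable M (\<lambda>\<omega>. \<bar>e t \<omega>\<bar> powr r)) \<and>
          (\<exists>\<delta>>0. (\<lambda>k::nat. mixing_coeff M e (int k))
                    \<in> O(\<lambda>k. real k powr (- (r / (r - 2)) - \<delta>)))"
    and zero_mean: "\<forall>t. integral\<^sup>L M (e t) = 0"
    and stat: "strictly_stationary M e"
    and gamma0: "acov M e 0 \<noteq> 0"
    and X_moments: "\<forall>j\<in>{0,1::int}. \<forall>i l. \<forall>t s.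
          integrable M (\<lambda>\<omega>. X t \<omega> $ i * e (t - j) \<omega>) \<and>
          integrable M (\<lambda>\<omega>. X (t - j) \<omega> $ i * e t \<omega>) \<and>
          integrable M (\<lambda>\<omega>. X t \<omega> $ i * X (t - j) \<omega> $ l) \<and>
          integral\<^sup>L M (\<lambda>\<omega>. X t \<omega> $ i * e (t - j) \<omega>) = integral\<^sup>L M (\<lambda>\<omega>. X s \<omega> $ i * e (s - j) \<omega>) \<and>
          integral\<^sup>L M (\<lambda>\<omega>. X (t - j) \<omega> $ i * e t \<omega>) = integral\<^sup>L M (\<lambda>\<omega>. X (s - j) \<omega> $ i * e s \<omega>) \<and>
          integral\<^sup>L M (\<lambda>\<omega>. X t \<omega> $ i * X (t - j) \<omega> $ l) = integral\<^sup>L M (\<lambda>\<omega>. X s \<omega> $ i * X (s - j) \<omega> $ l)"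
    and consistent: "conv_prob M (\<lambda>T. ols X y T) \<beta>"
  shows "conv_prob M (\<lambda>T. rho_hat X y T) (acov M e 1 / acov M e 0)
       \<and> conv_prob M (\<lambda>T \<omega>. (y (int T + 1) \<omega> - pred X y T \<omega>) - e (int T + 1) \<omega>) 0
       \<and> (\<forall>T::nat. integral\<^sup>L M (e (int T + 1)) = 0 \<and>
             integral\<^sup>L M (\<lambda>\<omega>. (e (int T + 1) \<omega> - integral\<^sup>L M (e (int T + 1)))^2) = acov M e 0)
       \<and> conv_prob M (\<lambda>T \<omega>. (y (int T + 1) \<omega> - pred_plus X y T \<omega>)
             - (e (int T + 1) \<omega> - (acov M e 1 / acov M e 0) * e (int T) \<omega>)) 0
       \<and> (\<forall>T::nat.
           integral\<^sup>L M (\<lambda>\<omega>. e (int T + 1) \<omega> - (acov M e 1 / acov M e 0) * e (int T) \<omega>) = 0 \<and>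
           integral\<^sup>L M (\<lambda>\<omega>. (e (int T + 1) \<omega> - (acov M e 1 / acov M e 0) * e (int T) \<omega>
              - integral\<^sup>L M (\<lambda>\<omega>. e (int T + 1) \<omega> - (acov M e 1 / acov M e 0) * e (int T) \<omega>))^2)
             = acov M e 0 * (1 - (acov M e 1 / acov M e 0)^2))"
proof -
  interpret prob_space M
    by (rule P)
  obtain r \<delta> where "r > 2" and "\<delta> > 0" and e_moment: "\<And>t. integrable M (\<lambda>\<omega>. \<bar>e t \<omega>\<bar> powr r)"
    and rate: "(\<lambda>k::nat. mixing_coeff M e (int k)) \<in> O(\<lambda>k. real k powr (- (r / (r - 2)) - \<delta>))"
    using moments_mixing by blast
  have "- (r / (r - 2)) - \<delta> < 0"
    using \<open>r > 2\<close> \<open>\<delta> > 0\<close> divide_pos_pos[of r "r - 2"] by linarith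
  then have mixing: "(\<lambda>k::nat. mixing_coeff M e (int k)) \<longlonglongrightarrow> 0"
    by (rule tendsto_zero_if_bigo_powr_neg[OF rate])
  have e_square: "integrable M (\<lambda>\<omega>. (e 0 \<omega>)\<^sup>2)"
    using \<open>r > 2\<close> by (intro integrable_square_if_integrable_abs_powr[OF _ e_moment]) (simp_all add: e_meas)
  have "integrable M (\<lambda>\<omega>. X t \<omega> $ i * X t \<omega> $ i)"
    and "expectation (\<lambda>\<omega>. X t \<omega> $ i * X t \<omega> $ i) = expectation (\<lambda>\<omega>. X 0 \<omega> $ i * X 0 \<omega> $ i)" for t i
    using X_moments[rule_format, where j = 0 and i = i and l = i and t = t and s = 0] by simp_all
  note X_norm = norm_square_moments_if_component_moments[where X = X, OF this]
  interpret regression_model M e X y \<beta>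
    by unfold_locales (simp_all add: e_meas stat mixing model X_meas zero_mean e_square X_norm consistent gamma0)
  show ?thesis
    using rho_hat_conv_prob pred_error_conv_prob pred_plus_error_conv_prob
      innovation_moments e_zero_mean expectation_e_square
    by simp
qed

end
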